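(* Let $T$ be a tree with $n$ vertices. The straight-line drawing of $T$ produced by Algorithm 2 is monotone (and planar), and every vertex is placed at an integer point $(x,y)$ with $|x|\le\frac{n-\mathrm{odd}(n)}{2}$ and $0\le y\le\frac{n-\mathrm{odd}(n)}{2}$. Hence the drawing fits on a grid of $n\times\frac{n+1}{2}$ points when $n$ is odd and of $(n+1)\times(\frac{n}{2}+1)$ points when $n$ is even.
   Context: A vertex $r$ of an $n$-vertex tree $T$ is a gravity root if every connected component of $T\setminus r$ has at most $\frac{n}{2}$ vertices. $\mathrm{odd}(n)=1$ if $n$ is odd, $0$ otherwise. $T_v$ is the subtree rooted at $v$, $|T_v|$ its number of vertices. A grid of $a\times b$ points means $a$ consecutive integer $x$-values and $b$ consecutive integer $y$-values. Strategy 1: for a non-leaf vertex $u$ with assigned $a_1(u)<a_2(u)$ and children $v_1,\dots,v_m$ in order, set $a_1(v_1)=a_1(u)$, $a_1(v_i)=a_2(v_{i-1})$ for $1<i\le m$, and $a_2(v_i)=a_1(v_i)+(a_2(u)-a_1(u))\cdot\frac{|T_{v_i}|}{|T_u|-1}$. Point rule $P_1(\theta_1,\theta_2)$ for $0\le\theta_1<\theta_2\le\frac{\pi}{2}$, with $d=\lceil\frac{1}{\theta_2-\theta_1}\rceil$: (i) if $\theta_2-\theta_1>\frac{\pi}{4}$: $(1,1)$; (ii) if $\arctan(\frac12)<\theta_2-\theta_1\le\frac{\pi}{4}$: $(1,2)$ if $\theta_1\ge\frac{\pi}{4}$, $(1,1)$ if $\arctan(\frac12)\le\theta_1<\frac{\pi}{4}$,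 $(2,1)$ if $\theta_1<\arctan(\frac12)$; (iii) if $\theta_2-\theta_1\le\arctan(\frac12)$: $(d,\lfloor\tan(\theta_1)d+1\rfloor)$ if $\theta_2\le\frac{\pi}{4}$, $(1,1)$ if $\theta_1<\frac{\pi}{4}<\theta_2$, $(\lfloor\tan(\frac{\pi}{2}-\theta_2)d+1\rfloor,d)$ if $\theta_1\ge\frac{\pi}{4}$. Point rule $P_2(\beta_1,\beta_2)$ for $0\le\beta_1<\beta_2\le\pi$: $(0,1)$ if $\beta_1<\frac{\pi}{2}<\beta_2$; $P_1(\beta_1,\beta_2)$ if $\beta_2\le\frac{\pi}{2}$; $(-x,y)$ with $(x,y)=P_1(\pi-\beta_2,\pi-\beta_1)$ if $\beta_1\ge\frac{\pi}{2}$. Algorithm 2 (input: a tree $T$, possibly with a cyclic order of neighbors at each vertex): choose a gravity root $r$ and root $T$ at $r$ (children ordered according to the given embedding, if any); set $a_1(r)=0$, $a_2(r)=\pi$, assign angles to all other vertices top-down by Strategy 1; place $r$ at $(0,0)$; top-down, place each child $v$ of an already placed vertex $u$ at (position of $u$) $+P_2(a_1(v),a_2(v))$. A path $p_0,\dots,p_k$ in a straight-line drawing is monotone if there is a line $\ell$ such that the orthogonal projections of $p_0,\dots,p_k$ onto $\ell$ appear along $\ell$ in this order; a drawing is monotone if every pair of vertices is joined by a monotone path. *)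

theory Defs
  imports "HOL-Analysis.Analysis"
begin

definition walk :: "('a \<times> 'a) set \<Rightarrow> 'a list \<Rightarrow> bool" where
  "walk E xs \<longleftrightarrow> xs \<noteq> [] \<and> (\<forall>i < length xs - 1. (xs ! i, xs ! Suc i) \<in> E)"

(* a tree: finite nonempty connected graph with n-1 (undirected) edges;
   E contains both orientations of every edge *)
definition is_tree :: "'a set \<Rightarrow> ('a \<times> 'a) set \<Rightarrow> bool" where
  "is_tree V E \<longleftrightarrow> finite V \<and> V \<noteq> {} \<and> E \<subseteq> V \<times> V \<and> sym E \<and> (\<forall>x. (x, x) \<notin> E)
     \<and> (\<forall>u\<in>V. \<forall>v\<in>V. (u, v) \<in> E\<^sup>*) \<and> card E = 2 * (card V - 1)"

definition comp_without :: "'a set \<Rightarrow> ('a \<times> 'a) set \<Rightarrow> 'a \<Rightarrow> 'a \<Rightarrow> 'a set" where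
  "comp_without V E r x = {y. (x, y) \<in> (E \<inter> ((V - {r}) \<times> (V - {r})))\<^sup>*}"

definition gravity_root :: "'a set \<Rightarrow> ('a \<times> 'a) set \<Rightarrow> 'a \<Rightarrow> bool" where
  "gravity_root V E r \<longleftrightarrow> r \<in> V \<and>
     (\<forall>x \<in> V - {r}. real (card (comp_without V E r x)) \<le> real (card V) / 2)"

definition subtree :: "'a set \<Rightarrow> ('a \<times> 'a) set \<Rightarrow> 'a \<Rightarrow> 'a \<Rightarrow> 'a set" where
  "subtree V E r u = {v \<in> V. \<forall>xs. walk E xs \<and> hd xs = r \<and> last xs = v \<longrightarrow> u \<in> set xs}"

definition children :: "'a set \<Rightarrow> ('a \<times> 'a) set \<Rightarrow> 'a \<Rightarrow> 'a \<Rightarrow> 'a set" where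
  "children V E r u = {v. (u, v) \<in> E \<and> v \<in> subtree V E r u \<and> v \<noteq> u}"

definition child_order :: "'a set \<Rightarrow> ('a \<times> 'a) set \<Rightarrow> 'a \<Rightarrow> ('a \<Rightarrow> 'a list) \<Rightarrow> bool" where
  "child_order V E r chl \<longleftrightarrow> (\<forall>u\<in>V. distinct (chl u) \<and> set (chl u) = children V E r u)"

definition strategy1 :: "'a set \<Rightarrow> ('a \<times> 'a) set \<Rightarrow> 'a \<Rightarrow> ('a \<Rightarrow> 'a list)
    \<Rightarrow> ('a \<Rightarrow> real) \<Rightarrow> ('a \<Rightarrow> real) \<Rightarrow> bool" where
  "strategy1 V E r chl a1 a2 \<longleftrightarrow> a1 r = 0 \<and> a2 r = pi \<and>
     (\<forall>u\<in>V. \<forall>i < length (chl u).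
        a1 (chl u ! i) = (if i = 0 then a1 u else a2 (chl u ! (i - 1))) \<and>
        a2 (chl u ! i) = a1 (chl u ! i) + (a2 u - a1 u) *
            real (card (subtree V E r (chl u ! i))) / (real (card (subtree V E r u)) - 1))"

definition P1 :: "real \<Rightarrow> real \<Rightarrow> int \<times> int" where
  "P1 t1 t2 = (let d = \<lceil>1 / (t2 - t1)\<rceil> in
     if t2 - t1 > pi / 4 then (1, 1)
     else if t2 - t1 > arctan (1/2) then
       (if t1 \<ge> pi / 4 then (1, 2) else if t1 \<ge> arctan (1/2) then (1, 1) else (2, 1))
     else if t2 \<le> pi / 4 then (d, \<lfloor>tan t1 * real_of_int d + 1\<rfloor>)
     else if t1 < pi / 4 then (1, 1)
     else (\<lfloor>tan (pi / 2 - t2) * real_of_int d + 1\<rfloor>, d))"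

definition P2 :: "real \<Rightarrow> real \<Rightarrow> int \<times> int" where
  "P2 b1 b2 = (if b1 < pi / 2 \<and> pi / 2 < b2 then (0, 1)
     else if b2 \<le> pi / 2 then P1 b1 b2
     else (- fst (P1 (pi - b2) (pi - b1)), snd (P1 (pi - b2) (pi - b1))))"

definition algorithm2 :: "'a set \<Rightarrow> ('a \<times> 'a) set \<Rightarrow> 'a \<Rightarrow> ('a \<Rightarrow> 'a list)
    \<Rightarrow> ('a \<Rightarrow> real) \<Rightarrow> ('a \<Rightarrow> real) \<Rightarrow> ('a \<Rightarrow> int \<times> int) \<Rightarrow> bool" where
  "algorithm2 V E r chl a1 a2 pos \<longleftrightarrow>
     gravity_root V E r \<and> child_order V E r chl \<and> strategy1 V E r chl a1 a2 \<and>
     pos r = (0, 0) \<and>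
     (\<forall>u\<in>V. \<forall>v \<in> children V E r u.
        pos v = (fst (pos u) + fst (P2 (a1 v) (a2 v)), snd (pos u) + snd (P2 (a1 v) (a2 v))))"

definition rpt :: "('a \<Rightarrow> int \<times> int) \<Rightarrow> 'a \<Rightarrow> real \<times> real" where
  "rpt pos v = (real_of_int (fst (pos v)), real_of_int (snd (pos v)))"

definition proj :: "real \<times> real \<Rightarrow> real \<times> real \<Rightarrow> real" where
  "proj d p = fst d * fst p + snd d * snd p"

definition monotone_path :: "('a \<Rightarrow> int \<times> int) \<Rightarrow> 'a list \<Rightarrow> bool" where
  "monotone_path pos xs \<longleftrightarrow> (\<exists>d :: real \<times> real. d \<noteq> 0 \<and>
     (\<forall>i < length xs - 1. proj d (rpt pos (xs ! i)) < proj d (rpt pos (xs ! Suc i))))"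

definition monotone_drawing :: "'a set \<Rightarrow> ('a \<times> 'a) set \<Rightarrow> ('a \<Rightarrow> int \<times> int) \<Rightarrow> bool" where
  "monotone_drawing V E pos \<longleftrightarrow> (\<forall>u\<in>V. \<forall>v\<in>V. \<exists>xs. walk E xs \<and> distinct xs \<and>
     hd xs = u \<and> last xs = v \<and> monotone_path pos xs)"

definition planar_drawing :: "'a set \<Rightarrow> ('a \<times> 'a) set \<Rightarrow> ('a \<Rightarrow> int \<times> int) \<Rightarrow> bool" where
  "planar_drawing V E pos \<longleftrightarrow> inj_on pos V \<and>
     (\<forall>a b c d. (a, b) \<in> E \<and> (c, d) \<in> E \<and> {a, b} \<noteq> {c, d} \<longrightarrow>
        closed_segment (rpt pos a) (rpt pos b) \<inter> closed_segment (rpt pos c) (rpt pos d)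
          \<subseteq> rpt pos ` ({a, b} \<inter> {c, d})) \<and>
     (\<forall>a b w. (a, b) \<in> E \<and> w \<in> V \<and> w \<notin> {a, b} \<longrightarrow>
        rpt pos w \<notin> closed_segment (rpt pos a) (rpt pos b))"

definition odd_ind :: "nat \<Rightarrow> nat" where
  "odd_ind n = (if odd n then 1 else 0)"

end

theory Submission
  imports Defs
begin

text \<open>
  Strategy 1 assigns every vertex \<open>v\<close> an open interval of angles \<open>(a1 v, a2 v) \<subseteq> (0, pi)\<close>; the
  intervals are nested along the tree, disjoint between siblings, and their widths are
  proportional to the subtree sizes. The point rules \<open>P1\<close>/\<open>P2\<close> place every child at an integer
  offset from its parent whose direction lies strictly inside its interval. Hence if a direction
  \<open>l\<close> has positive inner product with all directions of the interval of \<open>c\<close>, the projection on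
  \<open>l\<close> strictly increases along every downward path in \<open>T_c\<close>. A path climbing from one child
  subtree to the common parent and descending into a sibling subtree is therefore monotone for
  the normal of the ray separating the two sibling intervals; the same separation shows that edges
  in different subtrees do not cross, so the drawing is planar.

  For the grid size, every non-root interval has width at most
  \<open>K = pi \<lfloor>n/2\<rfloor> / (n - 1)\<close> since the gravity root makes \<open>|T_v| \<le> n/2\<close>, and an offset for an
  interval of width \<open>W\<close> has coordinates at most \<open>K / W\<close>. Along a root path these bounds telescope:
  \<open>(|T_u| - 1) / W u = |T_v| / W v\<close> for a child \<open>v\<close> of \<open>u\<close>, so every coordinate is at most
  \<open>K (n - 1) / pi = \<lfloor>n/2\<rfloor>\<close>.
\<close>

section \<open>Angles and lattice points\<close>

lemma arctan_half_le_half: "arctan (1/2::real) \<le> 1/2"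
  by (rule arctan_le_self) simp

lemma arctan_half_less_pi_quarter: "arctan (1/2::real) < pi/4"
  using arctan_less_iff[of "1/2" 1] by (simp add: arctan_one)

lemma pi_quarter_less_two_arctan_half: "pi/4 < 2 * arctan (1/2::real)"
proof -
  have "arctan (1/2::real) + arctan (1/2) = arctan ((1/2 + 1/2) / (1 - 1/2 * (1/2)))"
    by (rule arctan_add) auto
  then have "2 * arctan (1/2::real) = arctan (4/3)" by simp
  moreover have "arctan 1 < arctan (4/3::real)" by (simp only: arctan_less_iff)
  ultimately show ?thesis by (simp add: arctan_one)
qed

lemma arctan_two: "arctan (2::real) = pi/2 - arctan (1/2)"
  using arctan_inverse[of 2] by simp

lemma tan_diff_gt_diff:
  assumes "0 \<le> a" "a < b" "b < pi/2"
  shows "b - a < tan b - tan a"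
proof -
  have "DERIV (\<lambda>x. tan x - x) x :> inverse ((cos x)\<^sup>2) - 1" if "a \<le> x" "x \<le> b" for x
  proof -
    have "cos x \<noteq> 0" using that assms by (intro cos_gt_zero_pi[THEN less_imp_neq, symmetric]) auto
    then show ?thesis by (auto intro!: derivative_eq_intros)
  qed
  from MVT2[OF assms(2) this] obtain z
    where z: "a < z" "z < b" "(tan b - b) - (tan a - a) = (b - a) * (inverse ((cos z)\<^sup>2) - 1)"
    by blast
  have "0 < cos z" using z assms by (intro cos_gt_zero_pi) auto
  moreover have "cos z < 1" using cos_monotone_0_pi[of 0 z] z assms pi_gt3 by auto
  ultimately have "1 < inverse ((cos z)\<^sup>2)"
    by (simp add: one_less_inverse power_less_one_iff)
  then have "0 < (b - a) * (inverse ((cos z)\<^sup>2) - 1)" using assms by simp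
  with z show ?thesis by simp
qed

definition in_sector :: "real \<Rightarrow> real \<Rightarrow> real \<times> real \<Rightarrow> bool" where
  "in_sector t1 t2 p \<longleftrightarrow> (\<exists>\<rho> \<phi>. 0 < \<rho> \<and> t1 < \<phi> \<and> \<phi> < t2 \<and> p = \<rho> *\<^sub>R (cos \<phi>, sin \<phi>))"

lemma in_sector_arctan:
  assumes "0 < x" "t1 < arctan (y/x)" "arctan (y/x) < t2"
  shows "in_sector t1 t2 (x, y)"
proof -
  define \<rho> where "\<rho> = x * sqrt (1 + (y/x)\<^sup>2)"
  have "0 < sqrt (1 + (y/x)\<^sup>2)" by (simp add: add_pos_nonneg)
  then have "0 < \<rho>" "x = \<rho> * cos (arctan (y/x))" "y = \<rho> * sin (arctan (y/x))"
    using assms(1) by (simp_all add: \<rho>_def cos_arctan sin_arctan)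
  then show ?thesis unfolding in_sector_def using assms(2,3)
    by (intro exI[of _ \<rho>] exI[of _ "arctan (y/x)"]) simp
qed

lemma in_sector_swap:
  assumes "in_sector t1 t2 (x, y)"
  shows "in_sector (pi/2 - t2) (pi/2 - t1) (y, x)"
proof -
  obtain \<rho> \<phi> where "0 < \<rho>" "t1 < \<phi>" "\<phi> < t2" "(x, y) = \<rho> *\<^sub>R (cos \<phi>, sin \<phi>)"
    using assms unfolding in_sector_def by blast
  moreover have "cos (pi/2 - \<phi>) = sin \<phi>" "sin (pi/2 - \<phi>) = cos \<phi>"
    by (simp_all add: cos_diff sin_diff)
  ultimately show ?thesis unfolding in_sector_def
    by (intro exI[of _ \<rho>] exI[of _ "pi/2 - \<phi>"]) auto
qed

lemma in_sector_reflect: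
  "in_sector t1 t2 (x, y) \<Longrightarrow> in_sector (pi - t2) (pi - t1) (- x, y)"
  unfolding in_sector_def
  by (elim exE, rule_tac x=\<rho> in exI, rule_tac x="pi - \<phi>" in exI) auto

definition of_int_pt :: "int \<times> int \<Rightarrow> real \<times> real" where
  "of_int_pt p = (real_of_int (fst p), real_of_int (snd p))"

definition narrow_point :: "real \<Rightarrow> real \<Rightarrow> int \<times> int" where
  "narrow_point t1 t2 = (\<lceil>1 / (t2 - t1)\<rceil>, \<lfloor>tan t1 * real_of_int \<lceil>1 / (t2 - t1)\<rceil> + 1\<rfloor>)"

text \<open>At abscissa \<open>d = \<lceil>1/W\<rceil>\<close> the sector has vertical extent \<open>d (tan t2 - tan t1) > d W \<ge> 1\<close>
  (as \<open>tan\<close> grows faster than the identity), so it contains the first lattice point above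
  \<open>d tan t1\<close>.\<close>

lemma narrow_point_spec:
  assumes "0 \<le> t1" "t1 < t2" "t2 \<le> pi/4" "t2 - t1 \<le> arctan (1/2)"
  defines "p \<equiv> narrow_point t1 t2"
  shows "in_sector t1 t2 (of_int_pt p)" "0 \<le> snd p" "snd p \<le> fst p"
    "real_of_int (fst p) \<le> 1 / (t2 - t1) + 1"
proof -
  define d where "d = \<lceil>1 / (t2 - t1)\<rceil>"
  define m where "m = \<lfloor>tan t1 * real_of_int d + 1\<rfloor>"
  have p: "p = (d, m)" unfolding p_def narrow_point_def d_def m_def ..
  have W: "0 < t2 - t1" using assms by simp
  have d_ge: "1 / (t2 - t1) \<le> real_of_int d" unfolding d_def by (rule le_of_int_ceiling)
  have "0 < real_of_int d" using d_ge W by (meson divide_pos_pos order_less_le_trans zero_less_one)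
  have "1 \<le> (t2 - t1) * real_of_int d" using d_ge W by (simp add: field_simps)
  have "0 \<le> tan t1" using tan_mono_le[of 0 t1] assms by simp
  have "t2 - t1 < tan t2 - tan t1" using assms by (intro tan_diff_gt_diff) auto
  have "tan t2 \<le> 1" using tan_mono_le[of t2 "pi/4"] assms by (simp add: tan_45)
  have m_gt: "tan t1 * real_of_int d < real_of_int m"
    unfolding m_def using floor_correct[of "tan t1 * real_of_int d + 1"] by linarith
  have m_le: "real_of_int m \<le> tan t1 * real_of_int d + 1"
    unfolding m_def by (rule of_int_floor_le)
  have "real_of_int m < tan t2 * real_of_int d"
  proof -
    have "real_of_int m \<le> tan t1 * real_of_int d + (t2 - t1) * real_of_int d"
      using m_le \<open>1 \<le> (t2 - t1) * real_of_int d\<close> by linarith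
    also have "\<dots> = (tan t1 + (t2 - t1)) * real_of_int d" by (simp add: algebra_simps)
    also have "\<dots> < tan t2 * real_of_int d"
      using \<open>t2 - t1 < tan t2 - tan t1\<close> \<open>0 < real_of_int d\<close> by (intro mult_strict_right_mono) auto
    finally show ?thesis .
  qed
  then have "arctan (real_of_int m / real_of_int d) < arctan (tan t2)"
    using \<open>0 < real_of_int d\<close> by (simp add: arctan_less_iff field_simps)
  moreover have "arctan (tan t1) < arctan (real_of_int m / real_of_int d)"
    using m_gt \<open>0 < real_of_int d\<close> by (simp add: arctan_less_iff field_simps)
  ultimately show "in_sector t1 t2 (of_int_pt p)"
    unfolding p of_int_pt_def using assms \<open>0 < real_of_int d\<close>
    by (intro in_sector_arctan) (auto simp: arctan_tan)
  show "0 \<le> snd p" using m_gt \<open>0 \<le> tan t1\<close> \<open>0 < real_of_int d\<close> unfolding p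
    by (smt (verit) mult_nonneg_nonneg of_int_0_le_iff snd_conv)
  have "tan t1 * real_of_int d < real_of_int d"
    using \<open>t2 - t1 < tan t2 - tan t1\<close> \<open>tan t2 \<le> 1\<close> W \<open>0 < real_of_int d\<close> by simp
  then show "snd p \<le> fst p" using m_le unfolding p by simp
  show "real_of_int (fst p) \<le> 1 / (t2 - t1) + 1"
    unfolding p d_def using ceiling_correct[of "1 / (t2 - t1)"] by simp
qed

definition admissible_step :: "real \<Rightarrow> real \<Rightarrow> int \<times> int \<Rightarrow> bool" where
  "admissible_step t1 t2 p \<longleftrightarrow> in_sector t1 t2 (of_int_pt p) \<and> 0 \<le> snd p \<and>
     real_of_int \<bar>fst p\<bar> \<le> max 1 (pi / (2 * (t2 - t1))) \<and> real_of_int (snd p) \<le> max 1 (pi / (2 * (t2 - t1)))"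

lemma admissible_step_reflect:
  assumes "admissible_step (pi - t2) (pi - t1) (x, y)"
  shows "admissible_step t1 t2 (- x, y)"
proof -
  have "(pi - t1) - (pi - t2) = t2 - t1" by simp
  then show ?thesis
    using assms in_sector_reflect[of "pi - t2" "pi - t1" "real_of_int x" "real_of_int y"]
    unfolding admissible_step_def of_int_pt_def by auto
qed

lemma admissible_step_swap:
  assumes "admissible_step (pi/2 - t2) (pi/2 - t1) (x, y)" "0 \<le> x"
  shows "admissible_step t1 t2 (y, x)"
proof -
  have "(pi/2 - t1) - (pi/2 - t2) = t2 - t1" by simp
  then show ?thesis
    using assms in_sector_swap[of "pi/2 - t2" "pi/2 - t1" "real_of_int x" "real_of_int y"]
    unfolding admissible_step_def of_int_pt_def by auto
qed

lemma inverse_plus_one_le_pi_half_div: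
  fixes W :: real
  assumes "0 < W" "W \<le> 1/2"
  shows "1 / W + 1 \<le> pi / (2 * W)"
proof -
  have "1 / W + 1 = (1 + W) / W" using assms by (simp add: field_simps)
  also have "\<dots> \<le> (pi / 2) / W" using assms pi_gt3 by (intro divide_right_mono) auto
  finally show ?thesis by simp
qed

lemma max_one_pi_half_div_le:
  fixes W K :: real
  assumes "0 < W" "W \<le> K" "pi/2 \<le> K"
  shows "max 1 (pi / (2 * W)) \<le> K / W"
proof -
  have "1 \<le> K / W" using assms by simp
  moreover have "(pi / 2) / W \<le> K / W" by (rule divide_right_mono) (use assms in auto)
  ultimately show ?thesis by simp
qed

lemma div_2_ge: "(real n - 1) / 2 \<le> real (n div 2)"
proof -
  have "n \<le> 2 * (n div 2) + 1" by linarith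
  then have "real n \<le> 2 * real (n div 2) + 1" by linarith
  then show ?thesis by simp
qed

lemma admissible_step_narrow_point:
  assumes "0 \<le> t1" "t1 < t2" "t2 \<le> pi/4" "t2 - t1 \<le> arctan (1/2)"
  shows "admissible_step t1 t2 (narrow_point t1 t2)" "0 \<le> fst (narrow_point t1 t2)"
proof -
  have "1 / (t2 - t1) + 1 \<le> pi / (2 * (t2 - t1))"
    using assms arctan_half_le_half by (intro inverse_plus_one_le_pi_half_div) auto
  moreover have "real_of_int (snd (narrow_point t1 t2)) \<le> real_of_int (fst (narrow_point t1 t2))"
    using narrow_point_spec(3)[OF assms] by simp
  ultimately show "admissible_step t1 t2 (narrow_point t1 t2)"
    using narrow_point_spec[OF assms] unfolding admissible_step_def by (auto simp: le_max_iff_disj)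
  show "0 \<le> fst (narrow_point t1 t2)" using narrow_point_spec(2,3)[OF assms] by simp
qed

lemma in_sector_diagonal: "t1 < pi/4 \<Longrightarrow> pi/4 < t2 \<Longrightarrow> in_sector t1 t2 (1, 1)"
  by (intro in_sector_arctan) (auto simp: arctan_one)

lemma admissible_step_P1_medium:
  assumes "0 \<le> t1" "t2 \<le> pi/2" "arctan (1/2) < t2 - t1" "t2 - t1 \<le> pi/4"
  shows "admissible_step t1 t2 (P1 t1 t2)"
proof -
  note A = arctan_half_le_half arctan_half_less_pi_quarter pi_quarter_less_two_arctan_half
    arctan_two arctan_one
  have P1: "P1 t1 t2 = (if t1 \<ge> pi/4 then (1, 2) else if t1 \<ge> arctan (1/2) then (1, 1) else (2, 1))"
    using assms unfolding P1_def by auto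
  have "in_sector t1 t2 (of_int_pt (P1 t1 t2))"
  proof -
    consider "pi/4 \<le> t1" | "arctan (1/2) \<le> t1" "t1 < pi/4" | "t1 < arctan (1/2)" by linarith
    then show ?thesis
    proof cases
      case 1
      then have "t1 < arctan (2/1)" "arctan (2/1) < t2" using assms A by auto
      then show ?thesis using 1 unfolding P1 of_int_pt_def by (simp add: in_sector_arctan)
    next
      case 2
      then have "pi/4 < t2" using assms A by linarith
      then show ?thesis using 2 in_sector_diagonal unfolding P1 of_int_pt_def by simp
    next
      case 3
      then have "t1 < arctan (1/2)" "arctan (1/2) < t2" using assms by auto
      then show ?thesis using 3 A unfolding P1 of_int_pt_def by (simp add: in_sector_arctan)
    qed
  qed
  moreover have "2 \<le> pi / (2 * (t2 - t1))" using assms A by (simp add: field_simps)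
  ultimately show ?thesis unfolding admissible_step_def P1 by auto
qed

lemma admissible_step_P1:
  assumes "0 \<le> t1" "t1 < t2" "t2 \<le> pi/2"
  shows "admissible_step t1 t2 (P1 t1 t2)"
proof -
  define A where "A = arctan (1/2::real)"
  note A_facts = arctan_half_le_half arctan_half_less_pi_quarter pi_quarter_less_two_arctan_half
  consider (wide) "pi/4 < t2 - t1" | (medium) "A < t2 - t1" "t2 - t1 \<le> pi/4"
    | (low) "t2 - t1 \<le> A" "t2 \<le> pi/4" | (middle) "t2 - t1 \<le> A" "t1 < pi/4" "pi/4 < t2"
    | (high) "t2 - t1 \<le> A" "pi/4 \<le> t1"
    by fastforce
  then show ?thesis
  proof cases
    case wide
    then have "P1 t1 t2 = (1, 1)" "t1 < pi/4" "pi/4 < t2" using assms unfolding P1_def by auto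
    then show ?thesis using wide in_sector_diagonal unfolding admissible_step_def of_int_pt_def by simp
  next
    case medium
    then show ?thesis using admissible_step_P1_medium assms unfolding A_def by blast
  next
    case low
    then have "P1 t1 t2 = narrow_point t1 t2"
      using A_facts unfolding P1_def narrow_point_def A_def Let_def by auto
    then show ?thesis using admissible_step_narrow_point low assms unfolding A_def by simp
  next
    case middle
    then have "P1 t1 t2 = (1, 1)" using A_facts unfolding P1_def A_def by auto
    then show ?thesis
      using in_sector_diagonal middle A_facts unfolding admissible_step_def of_int_pt_def A_def by simp
  next
    case high
    have narrow: "0 \<le> pi/2 - t2" "pi/2 - t2 < pi/2 - t1" "pi/2 - t1 \<le> pi/4"
      "(pi/2 - t1) - (pi/2 - t2) \<le> arctan (1/2)"
      using high assms unfolding A_def by auto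
    have "P1 t1 t2 = prod.swap (narrow_point (pi/2 - t2) (pi/2 - t1))"
      using high assms A_facts unfolding P1_def narrow_point_def Let_def A_def by auto
    then show ?thesis
      using admissible_step_swap admissible_step_narrow_point[OF narrow] by (metis prod.collapse swap_simp)
  qed
qed

lemma admissible_step_P2:
  assumes "0 \<le> b1" "b1 < b2" "b2 \<le> pi"
  shows "admissible_step b1 b2 (P2 b1 b2)"
proof -
  consider (vertical) "b1 < pi/2" "pi/2 < b2" | (right) "b2 \<le> pi/2" | (left) "pi/2 \<le> b1" by linarith
  then show ?thesis
  proof cases
    case vertical
    then have "in_sector b1 b2 (0, 1)"
      unfolding in_sector_def by (intro exI[of _ 1] exI[of _ "pi/2"]) simp
    moreover have "P2 b1 b2 = (0, 1)" using vertical by (simp add: P2_def)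
    ultimately show ?thesis unfolding admissible_step_def of_int_pt_def by simp
  next
    case right
    then show ?thesis using admissible_step_P1[of b1 b2] assms by (simp add: P2_def)
  next
    case left
    then have "P2 b1 b2 = (- fst (P1 (pi - b2) (pi - b1)), snd (P1 (pi - b2) (pi - b1)))"
      using assms by (auto simp: P2_def)
    moreover have "admissible_step (pi - b2) (pi - b1) (P1 (pi - b2) (pi - b1))"
      using left assms by (intro admissible_step_P1) auto
    ultimately show ?thesis using admissible_step_reflect by (metis prod.collapse)
  qed
qed

section \<open>Rooted trees\<close>

lemma walk_iff_successively: "walk E xs \<longleftrightarrow> xs \<noteq> [] \<and> successively (\<lambda>a b. (a, b) \<in> E) xs"
  unfolding walk_def successively_conv_nth by (auto simp: less_diff_conv)

lemma distinct_if_successively_less: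
  fixes f :: "'a \<Rightarrow> 'b::order"
  assumes "successively (\<lambda>a b. f a < f b) xs"
  shows "distinct xs"
proof -
  have "sorted_wrt (\<lambda>a b. f a < f b) xs"
    using assms by (subst successively_conv_sorted_wrt[symmetric]) (auto simp: transp_def)
  then show ?thesis by (induction xs) auto
qed

locale rooted_tree =
  fixes V :: "'a set" and E :: "('a \<times> 'a) set" and r :: 'a
  assumes tree: "is_tree V E" and root_in_V: "r \<in> V"
begin

lemma finite_V: "finite V" and edges_subset: "E \<subseteq> V \<times> V" and sym_edges: "sym E"
  and connected: "u \<in> V \<Longrightarrow> v \<in> V \<Longrightarrow> (u, v) \<in> E\<^sup>*" and card_edges: "card E = 2 * (card V - 1)"
  using tree unfolding is_tree_def by auto

definition depth :: "'a \<Rightarrow> nat" where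
  "depth v = (LEAST k. (r, v) \<in> E ^^ k)"

lemma root_walk_depth: "v \<in> V \<Longrightarrow> (r, v) \<in> E ^^ depth v"
  unfolding depth_def using connected[OF root_in_V] by (metis LeastI rtrancl_power)

lemma depth_le: "(r, v) \<in> E ^^ k \<Longrightarrow> depth v \<le> k"
  unfolding depth_def by (rule Least_le)

lemma depth_root: "depth r = 0"
  using depth_le[of r 0] by simp

lemma depth_eq_0: "v \<in> V \<Longrightarrow> depth v = 0 \<Longrightarrow> v = r"
  using root_walk_depth[of v] by simp

lemma parent_exists:
  assumes "v \<in> V" "v \<noteq> r"
  shows "\<exists>u. (u, v) \<in> E \<and> Suc (depth u) = depth v"
proof -
  obtain m where m: "depth v = Suc m" using depth_eq_0 assms by (cases "depth v") auto
  then have "(r, v) \<in> E ^^ Suc m" using root_walk_depth[OF assms(1)] by simp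
  then obtain u where u: "(r, u) \<in> E ^^ m" "(u, v) \<in> E" by (meson relpow_Suc_E)
  then have "u \<in> V" using edges_subset by auto
  have "depth u \<le> m" using u depth_le by blast
  moreover have "(r, v) \<in> E ^^ Suc (depth u)" using root_walk_depth[OF \<open>u \<in> V\<close>] u(2) by auto
  then have "depth v \<le> Suc (depth u)" by (rule depth_le)
  ultimately show ?thesis using u m by (intro exI[of _ u]) auto
qed

definition parent :: "'a \<Rightarrow> 'a" where
  "parent v = (SOME u. (u, v) \<in> E \<and> Suc (depth u) = depth v)"

lemma
  assumes "v \<in> V" "v \<noteq> r"
  shows parent_edge: "(parent v, v) \<in> E"
    and depth_parent: "Suc (depth (parent v)) = depth v"
    and parent_in_V: "parent v \<in> V"
proof -
  show "(parent v, v) \<in> E" "Suc (depth (parent v)) = depth v"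
    unfolding parent_def using someI_ex[OF parent_exists[OF assms]] by auto
  then show "parent v \<in> V" using edges_subset by auto
qed

definition down_edges :: "('a \<times> 'a) set" where
  "down_edges = (\<lambda>v. (parent v, v)) ` (V - {r})"

lemma in_down_edges_iff: "(a, b) \<in> down_edges \<longleftrightarrow> b \<in> V \<and> b \<noteq> r \<and> a = parent b"
  unfolding down_edges_def by auto

text \<open>The parent edges already account for all \<open>card V - 1\<close> undirected edges, so there are no others.\<close>

lemma edges_eq_down_edges: "E = down_edges \<union> down_edges\<inverse>"
proof -
  have sub: "down_edges \<union> down_edges\<inverse> \<subseteq> E"
    using parent_edge sym_edges unfolding down_edges_def by (auto dest: symD)
  have "inj_on (\<lambda>v. (parent v, v)) (V - {r})" by (auto intro: inj_onI)
  then have card: "card down_edges = card V - 1"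
    unfolding down_edges_def using root_in_V finite_V by (simp add: card_image)
  have disj: "down_edges \<inter> down_edges\<inverse> = {}"
  proof (rule ccontr)
    assume "down_edges \<inter> down_edges\<inverse> \<noteq> {}"
    then obtain a b where "(a, b) \<in> down_edges" "(b, a) \<in> down_edges" by auto
    then have "b \<in> V" "b \<noteq> r" "a = parent b" "a \<in> V" "a \<noteq> r" "b = parent a"
      unfolding in_down_edges_iff by auto
    then have "Suc (depth a) = depth b" "Suc (depth b) = depth a"
      using depth_parent by metis+
    then show False by simp
  qed
  have "finite down_edges" unfolding down_edges_def using finite_V by simp
  then have "card (down_edges \<union> down_edges\<inverse>) = card E"
    using card_Un_disjoint[OF _ _ disj] card card_edges by simp
  moreover have "finite E" using edges_subset finite_V by (meson finite_SigmaI finite_subset)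
  ultimately show ?thesis using card_subset_eq[OF _ sub] by simp
qed

lemma edge_cases:
  "(a, b) \<in> E \<Longrightarrow> (b \<in> V \<and> b \<noteq> r \<and> a = parent b) \<or> (a \<in> V \<and> a \<noteq> r \<and> b = parent a)"
  using edges_eq_down_edges in_down_edges_iff by auto

definition desc :: "'a \<Rightarrow> 'a set" where
  "desc u = {v. (u, v) \<in> down_edges\<^sup>*}"

lemma desc_refl [simp]: "u \<in> desc u"
  unfolding desc_def by simp

lemma desc_depth: "v \<in> desc u \<Longrightarrow> depth u \<le> depth v \<and> (v \<noteq> u \<longrightarrow> depth u < depth v)"
  unfolding desc_def mem_Collect_eq
proof (induction rule: rtrancl_induct)
  case (step y z)
  then have "Suc (depth y) = depth z" using depth_parent in_down_edges_iff by auto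
  then show ?case using step by auto
qed simp

lemma desc_in_V: assumes "u \<in> V" "v \<in> desc u" shows "v \<in> V"
  using assms(2) unfolding desc_def mem_Collect_eq
  by (induction rule: rtrancl_induct) (auto simp: in_down_edges_iff assms(1))

lemma parent_in_desc:
  assumes "v \<in> desc u" "v \<noteq> u"
  shows "parent v \<in> desc u" "v \<in> V" "v \<noteq> r"
proof -
  from assms obtain y where "(u, y) \<in> down_edges\<^sup>*" "(y, v) \<in> down_edges"
    unfolding desc_def mem_Collect_eq by (blast elim: rtranclE)
  then show "parent v \<in> desc u" "v \<in> V" "v \<noteq> r" unfolding desc_def in_down_edges_iff by auto
qed

lemma desc_trans: "w \<in> desc v \<Longrightarrow> v \<in> desc u \<Longrightarrow> w \<in> desc u"
  unfolding desc_def by auto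

lemma in_desc_parent: "c \<in> V \<Longrightarrow> c \<noteq> r \<Longrightarrow> c \<in> desc (parent c)"
  unfolding desc_def using in_down_edges_iff by auto

lemma desc_through_child:
  assumes "v \<in> desc u" "v \<noteq> u"
  obtains c where "c \<in> V" "c \<noteq> r" "parent c = u" "v \<in> desc c"
proof -
  from assms obtain c where "(u, c) \<in> down_edges" "(c, v) \<in> down_edges\<^sup>*"
    unfolding desc_def mem_Collect_eq by (blast elim: converse_rtranclE)
  then show ?thesis using that unfolding desc_def in_down_edges_iff by auto
qed

lemma parent_funpow_desc: "v \<in> desc u \<Longrightarrow> (parent ^^ (depth v - depth u)) v = u"
  unfolding desc_def mem_Collect_eq
proof (induction rule: rtrancl_induct)
  case (step y z)
  then have z: "Suc (depth y) = depth z" "y = parent z" using depth_parent in_down_edges_iff by auto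
  have "depth u \<le> depth y" using step(1) desc_depth unfolding desc_def by auto
  then have "depth z - depth u = Suc (depth y - depth u)" using z by simp
  then show ?case using step z by (simp add: funpow_swap1)
qed simp

lemma parent_induct [consumes 1, case_names root parent]:
  assumes "x \<in> V" "P r" "\<And>x. x \<in> V \<Longrightarrow> x \<noteq> r \<Longrightarrow> P (parent x) \<Longrightarrow> P x"
  shows "P x"
proof -
  have "\<forall>x\<in>V. depth x = k \<longrightarrow> P x" for k
  proof (induction k)
    case 0
    then show ?case using depth_eq_0 assms(2) by auto
  next
    case (Suc k)
    show ?case
    proof (intro ballI impI)
      fix x assume x: "x \<in> V" "depth x = Suc k"
      then have "x \<noteq> r" using depth_root by auto
      then have "P (parent x)" using Suc parent_in_V depth_parent x by (metis Suc_inject)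
      then show "P x" using assms(3) x \<open>x \<noteq> r\<close> by blast
    qed
  qed
  then show ?thesis using assms(1) by blast
qed

lemma desc_root: "desc r = V"
proof
  show "V \<subseteq> desc r"
  proof
    fix x assume "x \<in> V"
    then show "x \<in> desc r"
      by (induction rule: parent_induct) (auto intro: desc_trans in_desc_parent)
  qed
qed (auto intro: desc_in_V[OF root_in_V])

lemma root_notin_desc: "u \<noteq> r \<Longrightarrow> u \<in> V \<Longrightarrow> r \<notin> desc u"
  using desc_depth[of r u] depth_root depth_eq_0 by auto

lemma finite_desc: "u \<in> V \<Longrightarrow> finite (desc u)"
  using finite_subset[OF _ finite_V] desc_in_V by blast

fun path_up :: "'a \<Rightarrow> nat \<Rightarrow> 'a list" where
  "path_up x 0 = [x]"
| "path_up x (Suc k) = x # path_up (parent x) k"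

lemma path_up_ne [simp]: "path_up x k \<noteq> []"
  by (cases k) auto

lemma hd_path_up [simp]: "hd (path_up x k) = x"
  by (cases k) auto

lemma last_path_up: "last (path_up x k) = (parent ^^ k) x"
  by (induction k arbitrary: x) (auto simp: funpow_swap1)

lemma last_path_up_to: "x \<in> desc c \<Longrightarrow> last (path_up x (depth x - depth c)) = c"
  using last_path_up parent_funpow_desc by simp

lemma successively_path_up:
  assumes "x \<in> desc c"
  shows "successively (\<lambda>a b. b = parent a \<and> a \<in> desc c \<and> a \<noteq> c) (path_up x (depth x - depth c))"
proof -
  have "successively (\<lambda>a b. b = parent a \<and> a \<in> desc c \<and> a \<noteq> c) (path_up x k)"
    if "x \<in> desc c" "k \<le> depth x - depth c" for k x
    using that
  proof (induction k arbitrary: x)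
    case (Suc k)
    then have "x \<noteq> c" by auto
    then have p: "parent x \<in> desc c" "x \<in> V" "x \<noteq> r" using parent_in_desc Suc by auto
    have "k \<le> depth (parent x) - depth c" using Suc depth_parent[OF p(2,3)] by simp
    then show ?case using Suc p \<open>x \<noteq> c\<close> by (cases k) (auto simp: successively_Cons)
  qed simp
  then show ?thesis using assms by blast
qed

lemma in_path_up_desc: "x \<in> V \<Longrightarrow> k \<le> depth x \<Longrightarrow> y \<in> set (path_up x k) \<Longrightarrow> x \<in> desc y"
proof (induction k arbitrary: x)
  case (Suc k)
  then have "x \<noteq> r" using depth_root by auto
  show ?case
  proof (cases "y = x")
    case False
    then have "parent x \<in> desc y"
      using Suc parent_in_V[OF Suc(2) \<open>x \<noteq> r\<close>] depth_parent[OF Suc(2) \<open>x \<noteq> r\<close>] by auto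
    then show ?thesis using in_desc_parent[OF Suc(2) \<open>x \<noteq> r\<close>] desc_trans by blast
  qed simp
qed simp

lemma edge_into_desc: assumes "(a, b) \<in> E" "a \<notin> desc u" "b \<in> desc u" shows "b = u"
proof (rule ccontr)
  assume "b \<noteq> u"
  from edge_cases[OF assms(1)] show False
  proof
    assume "b \<in> V \<and> b \<noteq> r \<and> a = parent b"
    then show False using parent_in_desc[OF assms(3) \<open>b \<noteq> u\<close>] assms(2) by auto
  next
    assume "a \<in> V \<and> a \<noteq> r \<and> b = parent a"
    then show False using in_desc_parent desc_trans assms by blast
  qed
qed

lemma walk_into_desc_visits:
  "successively (\<lambda>a b. (a, b) \<in> E) xs \<Longrightarrow> xs \<noteq> [] \<Longrightarrow> last xs \<in> desc u \<Longrightarrow> hd xs \<notin> desc u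
    \<Longrightarrow> u \<in> set xs"
proof (induction xs rule: induct_list012)
  case (3 a b zs)
  show ?case
  proof (cases "b \<in> desc u")
    case True
    then show ?thesis using edge_into_desc[of a b u] 3(3,6) by auto
  next
    case False
    then show ?thesis using 3 by auto
  qed
qed auto

lemma subtree_eq_desc: assumes "u \<in> V" shows "subtree V E r u = desc u"
proof
  show "subtree V E r u \<subseteq> desc u"
  proof
    fix v assume v: "v \<in> subtree V E r u"
    then have "v \<in> V" unfolding subtree_def by auto
    then have vr: "v \<in> desc r" using desc_root by simp
    define xs where "xs = rev (path_up v (depth v - depth r))"
    have "successively (\<lambda>a b. (b, a) \<in> E) (path_up v (depth v - depth r))"
      by (rule successively_mono[OF successively_path_up[OF vr]])
         (use parent_edge desc_in_V[OF root_in_V] in blast)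
    then have "walk E xs" unfolding walk_iff_successively xs_def by simp
    moreover have "hd xs = r" "last xs = v"
      unfolding xs_def using last_path_up_to[OF vr] by (auto simp: hd_rev last_rev)
    ultimately have "u \<in> set xs" using v unfolding subtree_def by auto
    then show "v \<in> desc u"
      using in_path_up_desc[OF \<open>v \<in> V\<close>, of "depth v"] unfolding xs_def depth_root by auto
  qed
  show "desc u \<subseteq> subtree V E r u"
  proof
    fix v assume v: "v \<in> desc u"
    have "u \<in> set xs" if "walk E xs" "hd xs = r" "last xs = v" for xs
    proof (cases "u = r")
      case True
      then show ?thesis using that by (auto simp: walk_def)
    next
      case False
      then show ?thesis
        using walk_into_desc_visits[of xs u] that v root_notin_desc[OF False assms]
        unfolding walk_iff_successively by auto
    qed
    then show "v \<in> subtree V E r u" unfolding subtree_def using desc_in_V[OF assms v] by auto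
  qed
qed

lemma children_eq: "children V E r u = {c \<in> V. c \<noteq> r \<and> parent c = u}"
proof -
  have "c \<in> children V E r u \<longleftrightarrow> c \<in> V \<and> c \<noteq> r \<and> parent c = u" for c
  proof
    assume c: "c \<in> children V E r u"
    then have "u \<in> V" using edges_subset unfolding children_def by auto
    then have c: "(u, c) \<in> E" "c \<in> desc u" "c \<noteq> u"
      using c unfolding children_def subtree_eq_desc[OF \<open>u \<in> V\<close>] by auto
    from edge_cases[OF c(1)] show "c \<in> V \<and> c \<noteq> r \<and> parent c = u"
    proof
      assume "u \<in> V \<and> u \<noteq> r \<and> c = parent u"
      then have "Suc (depth c) = depth u" using depth_parent by auto
      then show ?thesis using desc_depth[OF c(2)] by auto
    qed auto
  next
    assume c: "c \<in> V \<and> c \<noteq> r \<and> parent c = u"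
    then have "u \<in> V" using parent_in_V by blast
    have "Suc (depth u) = depth c" using depth_parent c by blast
    then have "(u, c) \<in> E" "c \<in> desc u" "c \<noteq> u" using parent_edge c in_desc_parent by auto
    then show "c \<in> children V E r u"
      unfolding children_def subtree_eq_desc[OF \<open>u \<in> V\<close>] by auto
  qed
  then show ?thesis by blast
qed

lemma desc_eq_insert_children: assumes "u \<in> V" shows "desc u = insert u (\<Union>c\<in>children V E r u. desc c)"
proof
  show "desc u \<subseteq> insert u (\<Union>c\<in>children V E r u. desc c)"
  proof
    fix v assume "v \<in> desc u"
    then show "v \<in> insert u (\<Union>c\<in>children V E r u. desc c)"
      by (cases "v = u") (auto elim: desc_through_child simp: children_eq)
  qed
  show "insert u (\<Union>c\<in>children V E r u. desc c) \<subseteq> desc u"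
    using in_desc_parent desc_trans unfolding children_eq by fastforce
qed

lemma desc_disjoint_siblings:
  assumes "c \<in> V" "c \<noteq> r" "c' \<in> V" "c' \<noteq> r" "parent c = parent c'" "c \<noteq> c'"
  shows "desc c \<inter> desc c' = {}"
proof (rule ccontr)
  assume "desc c \<inter> desc c' \<noteq> {}"
  then obtain w where w: "w \<in> desc c" "w \<in> desc c'" by auto
  have "depth c = depth c'" using depth_parent assms by (metis Suc_inject)
  then show False using parent_funpow_desc[OF w(1)] parent_funpow_desc[OF w(2)] assms(6) by simp
qed

lemma card_desc: assumes "u \<in> V"
  shows "card (desc u) = Suc (\<Sum>c\<in>children V E r u. card (desc c))"
proof -
  have fin: "finite (children V E r u)" unfolding children_eq using finite_V by simp
  have "u \<notin> (\<Union>c\<in>children V E r u. desc c)"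
    using desc_depth depth_parent unfolding children_eq by fastforce
  then have "card (desc u) = Suc (card (\<Union>c\<in>children V E r u. desc c))"
    using fin finite_desc unfolding children_eq
    by (subst desc_eq_insert_children[OF assms]) (auto simp: children_eq intro!: card_insert_disjoint)
  also have "card (\<Union>c\<in>children V E r u. desc c) = (\<Sum>c\<in>children V E r u. card (desc c))"
    using fin finite_desc desc_disjoint_siblings by (intro card_UN_disjoint) (auto simp: children_eq)
  finally show ?thesis .
qed

lemma incomparable_in_sibling_desc:
  assumes "u \<in> V" "v \<in> V" "u \<notin> desc v" "v \<notin> desc u"
  obtains c c' where "c \<in> V" "c \<noteq> r" "c' \<in> V" "c' \<noteq> r" "c \<noteq> c'" "parent c = parent c'"
    "u \<in> desc c" "v \<in> desc c'"
proof -
  have "\<exists>c c'. c \<in> V \<and> c \<noteq> r \<and> c' \<in> V \<and> c' \<noteq> r \<and> c \<noteq> c' \<and> parent c = parent c'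
    \<and> u \<in> desc c \<and> v \<in> desc c'"
    using assms
  proof (induction "depth u" arbitrary: u rule: less_induct)
    case less
    have "u \<noteq> r" using less desc_root by auto
    have u: "u \<in> desc (parent u)" using in_desc_parent less \<open>u \<noteq> r\<close> by auto
    show ?case
    proof (cases "v \<in> desc (parent u)")
      case True
      moreover have "v \<noteq> parent u" using u less by auto
      ultimately obtain c' where c': "c' \<in> V" "c' \<noteq> r" "parent c' = parent u" "v \<in> desc c'"
        by (rule desc_through_child)
      then show ?thesis using less(2,5) \<open>u \<noteq> r\<close> by (intro exI[of _ u] exI[of _ c']) auto
    next
      case False
      have "parent u \<notin> desc v" using u less desc_trans by blast
      moreover have "depth (parent u) < depth u" using depth_parent[OF less(2) \<open>u \<noteq> r\<close>] by simp
      ultimately show ?thesis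
        using less(1)[OF _ parent_in_V[OF less(2) \<open>u \<noteq> r\<close>] less(3) _ False] u desc_trans by metis
    qed
  qed
  then show ?thesis using that by blast
qed

end

section \<open>The angular intervals of Strategy 1\<close>

lemma scaled_subinterval:
  fixes w z s t a :: real
  assumes "0 < w" "0 < z" "0 \<le> s" "s < t" "t \<le> z"
  shows "a \<le> a + w * s / z" "a + w * s / z < a + w * t / z" "a + w * t / z \<le> a + w"
proof -
  show "a \<le> a + w * s / z" "a + w * s / z < a + w * t / z"
    using assms by (simp_all add: divide_strict_right_mono)
  have "w * t / z \<le> w * z / z" using assms by (intro divide_right_mono mult_left_mono) auto
  then show "a + w * t / z \<le> a + w" using assms by simp
qed

locale algorithm2_run = rooted_tree V E r for V :: "'a set" and E r +
  fixes chl :: "'a \<Rightarrow> 'a list" and a1 a2 :: "'a \<Rightarrow> real" and pos :: "'a \<Rightarrow> int \<times> int"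
  assumes algorithm2: "algorithm2 V E r chl a1 a2 pos"
begin

definition subtree_size :: "'a \<Rightarrow> real" where
  "subtree_size u = real (card (desc u))"

definition width :: "'a \<Rightarrow> real" where
  "width u = a2 u - a1 u"

definition prefix_size :: "'a \<Rightarrow> nat \<Rightarrow> real" where
  "prefix_size u i = (\<Sum>k<i. subtree_size (chl u ! k))"

lemma set_chl: "u \<in> V \<Longrightarrow> distinct (chl u) \<and> set (chl u) = {c \<in> V. c \<noteq> r \<and> parent c = u}"
  using algorithm2 children_eq unfolding algorithm2_def child_order_def by auto

lemma angles_root: "a1 r = 0" "a2 r = pi"
  using algorithm2 unfolding algorithm2_def strategy1_def by auto

lemma pos_root: "pos r = (0, 0)"
  using algorithm2 unfolding algorithm2_def by auto

lemma pos_child: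
  assumes "x \<in> V" "x \<noteq> r"
  shows "pos x = pos (parent x) + P2 (a1 x) (a2 x)"
proof -
  have "x \<in> children V E r (parent x)" using children_eq assms by auto
  then show ?thesis using algorithm2 parent_in_V[OF assms] unfolding algorithm2_def
    by (auto simp: plus_prod_def)
qed

lemma strategy1_child:
  assumes "u \<in> V" "i < length (chl u)"
  shows "a1 (chl u ! i) = (if i = 0 then a1 u else a2 (chl u ! (i - 1)))"
    "a2 (chl u ! i) = a1 (chl u ! i) + width u * subtree_size (chl u ! i) / (subtree_size u - 1)"
proof -
  have "chl u ! i \<in> V" using set_chl[OF assms(1)] assms(2) nth_mem by blast
  then show "a1 (chl u ! i) = (if i = 0 then a1 u else a2 (chl u ! (i - 1)))"
    "a2 (chl u ! i) = a1 (chl u ! i) + width u * subtree_size (chl u ! i) / (subtree_size u - 1)"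
    using algorithm2 assms subtree_eq_desc[OF assms(1)] subtree_eq_desc[of "chl u ! i"]
    unfolding algorithm2_def strategy1_def width_def subtree_size_def by auto
qed

lemma subtree_size_ge_1: "u \<in> V \<Longrightarrow> 1 \<le> subtree_size u"
  unfolding subtree_size_def using finite_desc[of u] desc_refl[of u]
  by (metis One_nat_def card_gt_0_iff empty_iff of_nat_1 of_nat_mono Suc_leI)

lemma prefix_size_Suc: "prefix_size u (Suc i) = prefix_size u i + subtree_size (chl u ! i)"
  unfolding prefix_size_def by simp

lemma prefix_size_all:
  assumes "u \<in> V"
  shows "prefix_size u (length (chl u)) = subtree_size u - 1"
proof -
  have "prefix_size u (length (chl u)) = sum_list (map subtree_size (chl u))"
    unfolding prefix_size_def sum_list_sum_nth by (simp add: atLeast0LessThan)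
  also have "\<dots> = sum subtree_size (set (chl u))"
    using set_chl[OF assms] by (simp add: sum_list_distinct_conv_sum_set)
  also have "\<dots> = subtree_size u - 1"
    using set_chl[OF assms] card_desc[OF assms] unfolding subtree_size_def children_eq by simp
  finally show ?thesis .
qed

lemma prefix_size_mono:
  assumes "i \<le> j" "u \<in> V" "j \<le> length (chl u)"
  shows "prefix_size u i \<le> prefix_size u j"
proof -
  have "0 \<le> subtree_size (chl u ! k)" if "k < j" for k
  proof -
    have "chl u ! k \<in> V" using set_chl[OF assms(2)] nth_mem[of k "chl u"] that assms(3) by auto
    then show ?thesis using subtree_size_ge_1 by fastforce
  qed
  then show ?thesis unfolding prefix_size_def using assms(1) by (intro sum_mono2) auto
qed

lemma angles_chl:
  assumes "u \<in> V" "i < length (chl u)"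
  shows "a1 (chl u ! i) = a1 u + width u * prefix_size u i / (subtree_size u - 1)"
    and "a2 (chl u ! i) = a1 u + width u * prefix_size u (Suc i) / (subtree_size u - 1)"
proof -
  have "a1 (chl u ! i) = a1 u + width u * prefix_size u i / (subtree_size u - 1)
    \<and> a2 (chl u ! i) = a1 u + width u * prefix_size u (Suc i) / (subtree_size u - 1)"
    using assms(2)
  proof (induction i)
    case 0
    have "a1 (chl u ! 0) = a1 u" using strategy1_child(1)[OF assms(1) 0] by simp
    then show ?case using strategy1_child(2)[OF assms(1) 0] by (simp add: prefix_size_def)
  next
    case (Suc i)
    then have "a1 (chl u ! Suc i) = a1 u + width u * prefix_size u (Suc i) / (subtree_size u - 1)"
      using strategy1_child(1)[OF assms(1) Suc(2)] by simp
    then show ?case using strategy1_child(2)[OF assms(1) Suc(2)]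
      unfolding prefix_size_Suc[of u "Suc i"] by (simp add: add_divide_distrib distrib_left)
  qed
  then show "a1 (chl u ! i) = a1 u + width u * prefix_size u i / (subtree_size u - 1)"
    and "a2 (chl u ! i) = a1 u + width u * prefix_size u (Suc i) / (subtree_size u - 1)"
    by auto
qed

lemma chl_index:
  assumes "x \<in> V" "x \<noteq> r"
  obtains i where "i < length (chl (parent x))" "chl (parent x) ! i = x"
proof -
  have "x \<in> set (chl (parent x))" using set_chl[OF parent_in_V[OF assms]] assms by auto
  then show ?thesis using that by (auto simp: in_set_conv_nth)
qed

lemma child_sector:
  assumes "x \<in> V" "x \<noteq> r"
  obtains i where
    "a1 x = a1 (parent x) + width (parent x) * prefix_size (parent x) i / (subtree_size (parent x) - 1)"
    "a2 x = a1 (parent x) + width (parent x) * prefix_size (parent x) (Suc i) / (subtree_size (parent x) - 1)"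
    "0 \<le> prefix_size (parent x) i"
    "prefix_size (parent x) (Suc i) = prefix_size (parent x) i + subtree_size x"
    "prefix_size (parent x) (Suc i) \<le> subtree_size (parent x) - 1"
proof -
  obtain i where i: "i < length (chl (parent x))" "chl (parent x) ! i = x" using chl_index[OF assms] .
  note p = parent_in_V[OF assms]
  show ?thesis
  proof (rule that[of i])
    have "prefix_size (parent x) 0 = 0" by (simp add: prefix_size_def)
    then show "0 \<le> prefix_size (parent x) i"
      using prefix_size_mono[OF le0 p, of i] i(1) by simp
    show "prefix_size (parent x) (Suc i) \<le> subtree_size (parent x) - 1"
      using prefix_size_mono[OF Suc_leI[OF i(1)] p order_refl] prefix_size_all[OF p] by simp
    show "a1 x = a1 (parent x) + width (parent x) * prefix_size (parent x) i / (subtree_size (parent x) - 1)"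
      using angles_chl(1)[OF p i(1)] unfolding i(2) .
    show "a2 x = a1 (parent x) + width (parent x) * prefix_size (parent x) (Suc i) / (subtree_size (parent x) - 1)"
      using angles_chl(2)[OF p i(1)] unfolding i(2) .
    show "prefix_size (parent x) (Suc i) = prefix_size (parent x) i + subtree_size x"
      using prefix_size_Suc[of "parent x" i] unfolding i(2) .
  qed
qed

lemma width_child:
  assumes "x \<in> V" "x \<noteq> r"
  shows "width x = width (parent x) * subtree_size x / (subtree_size (parent x) - 1)"
proof -
  obtain i where i:
    "a1 x = a1 (parent x) + width (parent x) * prefix_size (parent x) i / (subtree_size (parent x) - 1)"
    "a2 x = a1 (parent x) + width (parent x) * prefix_size (parent x) (Suc i) / (subtree_size (parent x) - 1)"
    "prefix_size (parent x) (Suc i) = prefix_size (parent x) i + subtree_size x"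
    by (rule child_sector[OF assms])
  have "width x = a2 x - a1 x" unfolding width_def ..
  also have "\<dots> = width (parent x) * (prefix_size (parent x) (Suc i) - prefix_size (parent x) i)
      / (subtree_size (parent x) - 1)"
    unfolding i(1,2) by (simp add: diff_divide_distrib right_diff_distrib)
  finally show ?thesis unfolding i(3) by simp
qed

lemma subtree_size_child_le:
  assumes "x \<in> V" "x \<noteq> r"
  shows "subtree_size x \<le> subtree_size (parent x) - 1"
proof -
  obtain i where
    "0 \<le> prefix_size (parent x) i"
    "prefix_size (parent x) (Suc i) = prefix_size (parent x) i + subtree_size x"
    "prefix_size (parent x) (Suc i) \<le> subtree_size (parent x) - 1"
    by (rule child_sector[OF assms])
  then show ?thesis by linarith
qed

lemma child_sector_within:
  assumes "x \<in> V" "x \<noteq> r" "a1 (parent x) < a2 (parent x)"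
  shows "a1 (parent x) \<le> a1 x" "a1 x < a2 x" "a2 x \<le> a2 (parent x)"
proof -
  obtain i where i:
    "a1 x = a1 (parent x) + width (parent x) * prefix_size (parent x) i / (subtree_size (parent x) - 1)"
    "a2 x = a1 (parent x) + width (parent x) * prefix_size (parent x) (Suc i) / (subtree_size (parent x) - 1)"
    "0 \<le> prefix_size (parent x) i"
    "prefix_size (parent x) (Suc i) = prefix_size (parent x) i + subtree_size x"
    "prefix_size (parent x) (Suc i) \<le> subtree_size (parent x) - 1"
    by (rule child_sector[OF assms(1,2)])
  have "1 \<le> subtree_size x" using subtree_size_ge_1 assms by simp
  have W: "0 < width (parent x)" using assms(3) unfolding width_def by simp
  have Z: "0 < subtree_size (parent x) - 1" using i \<open>1 \<le> subtree_size x\<close> by linarith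
  have "prefix_size (parent x) i < prefix_size (parent x) (Suc i)"
    using i(4) \<open>1 \<le> subtree_size x\<close> by linarith
  note bounds = scaled_subinterval[OF W Z i(3) this i(5), of "a1 (parent x)"]
  have "a1 (parent x) + width (parent x) = a2 (parent x)" unfolding width_def by simp
  then show "a1 (parent x) \<le> a1 x" "a1 x < a2 x" "a2 x \<le> a2 (parent x)"
    using bounds i(1,2) by linarith+
qed

lemma angles_valid:
  assumes "x \<in> V"
  shows "0 \<le> a1 x" "a1 x < a2 x" "a2 x \<le> pi"
proof -
  have "0 \<le> a1 x \<and> a1 x < a2 x \<and> a2 x \<le> pi"
    using assms
  proof (induction rule: parent_induct)
    case root
    then show ?case using angles_root by simp
  next
    case (parent y)
    then show ?case using child_sector_within[OF parent(1,2)] by linarith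
  qed
  then show "0 \<le> a1 x" "a1 x < a2 x" "a2 x \<le> pi" by auto
qed

lemma width_pos: "x \<in> V \<Longrightarrow> 0 < width x"
  using angles_valid unfolding width_def by simp

lemma sibling_sectors_disjoint:
  assumes "c \<in> V" "c \<noteq> r" "c' \<in> V" "c' \<noteq> r" "parent c = parent c'" "c \<noteq> c'"
  shows "a2 c \<le> a1 c' \<or> a2 c' \<le> a1 c"
proof -
  define p where "p = parent c"
  have p: "p \<in> V" using parent_in_V[OF assms(1,2)] p_def by simp
  obtain i where i: "i < length (chl p)" "chl p ! i = c"
    using chl_index[OF assms(1,2)] p_def by blast
  obtain j where j: "j < length (chl p)" "chl p ! j = c'"
    using chl_index[OF assms(3,4)] p_def assms(5) by metis
  have "0 < subtree_size p - 1"
    using subtree_size_child_le[OF assms(1,2)] subtree_size_ge_1[OF assms(1)] p_def by simp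
  have before: "a2 (chl p ! k) \<le> a1 (chl p ! l)" if "k < l" "l < length (chl p)" for k l
  proof -
    have "prefix_size p (Suc k) \<le> prefix_size p l" using prefix_size_mono[of "Suc k" l p] that p by simp
    then have "width p * prefix_size p (Suc k) / (subtree_size p - 1) \<le> width p * prefix_size p l / (subtree_size p - 1)"
      using width_pos[OF p] \<open>0 < subtree_size p - 1\<close> by (intro divide_right_mono mult_left_mono) auto
    then show ?thesis using angles_chl[OF p] that by simp
  qed
  have "i \<noteq> j" using i j assms(6) by auto
  show ?thesis
  proof (cases "i < j")
    case True
    then show ?thesis using before[OF True j(1)] i j by simp
  next
    case False
    then have "j < i" using \<open>i \<noteq> j\<close> by simp
    show ?thesis using before[OF \<open>j < i\<close> i(1)] i j by simp
  qed
qed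

lemma desc_sector_within:
  assumes "x \<in> V" "y \<in> desc x"
  shows "a1 x \<le> a1 y \<and> a2 y \<le> a2 x"
  using assms(2) unfolding desc_def mem_Collect_eq
proof (induction rule: rtrancl_induct)
  case (step y z)
  then have z: "z \<in> V" "z \<noteq> r" "y = parent z" using in_down_edges_iff by auto
  then have parent_sector: "a1 (parent z) < a2 (parent z)" using angles_valid parent_in_V by blast
  show ?case using child_sector_within[OF z(1,2) parent_sector] step.IH unfolding z(3) by linarith
qed simp

end

section \<open>Planarity\<close>

lemma proj_eq_inner: "proj d p = d \<bullet> p"
  by (cases d, cases p) (simp add: proj_def)

definition positive_on_sector :: "real \<times> real \<Rightarrow> real \<Rightarrow> real \<Rightarrow> bool" where
  "positive_on_sector l t1 t2 \<longleftrightarrow> (\<forall>\<phi>. t1 < \<phi> \<and> \<phi> < t2 \<longrightarrow> 0 < l \<bullet> (cos \<phi>, sin \<phi>))"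

lemma inner_pos_if_in_sector:
  assumes "positive_on_sector l t1 t2" "in_sector t1 t2 p"
  shows "0 < l \<bullet> p"
proof -
  obtain \<rho> \<phi> where "0 < \<rho>" "t1 < \<phi>" "\<phi> < t2" "p = \<rho> *\<^sub>R (cos \<phi>, sin \<phi>)"
    using assms(2) unfolding in_sector_def by blast
  moreover have "0 < l \<bullet> (cos \<phi>, sin \<phi>)"
    using assms(1) calculation unfolding positive_on_sector_def by blast
  ultimately show ?thesis by (simp only: inner_scaleR_right) simp
qed

lemma positive_on_subsector:
  "positive_on_sector l t1 t2 \<Longrightarrow> t1 \<le> s1 \<Longrightarrow> s2 \<le> t2 \<Longrightarrow> positive_on_sector l s1 s2"
  unfolding positive_on_sector_def by force

lemma positive_on_sector_nonzero: "t1 < t2 \<Longrightarrow> positive_on_sector l t1 t2 \<Longrightarrow> l \<noteq> 0"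
  unfolding positive_on_sector_def by (metis dense inner_zero_left less_irrefl)

lemma positive_on_sector_bisector:
  assumes "t2 - t1 \<le> pi"
  shows "positive_on_sector (cos ((t1 + t2) / 2), sin ((t1 + t2) / 2)) t1 t2"
  unfolding positive_on_sector_def
proof (intro allI impI)
  fix \<phi> assume "t1 < \<phi> \<and> \<phi> < t2"
  then have "- (pi/2) < \<phi> - (t1 + t2) / 2" and "\<phi> - (t1 + t2) / 2 < pi/2"
    using assms by (simp_all add: field_simps)
  then have "0 < cos (\<phi> - (t1 + t2) / 2)" by (rule cos_gt_zero_pi)
  then show "0 < (cos ((t1 + t2) / 2), sin ((t1 + t2) / 2)) \<bullet> (cos \<phi>, sin \<phi>)"
    by (simp add: cos_diff mult.commute)
qed

text \<open>Two consecutive sectors inside \<open>[0, pi]\<close> are separated by the normal of their common boundary ray.\<close>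

lemma positive_on_sectors_separated:
  assumes "0 \<le> t1" "t1 \<le> t2" "t2 \<le> s1" "s1 \<le> s2" "s2 \<le> pi"
  shows "positive_on_sector (sin t2, - cos t2) t1 t2"
    and "positive_on_sector (- (sin t2, - cos t2)) s1 s2"
proof -
  show "positive_on_sector (sin t2, - cos t2) t1 t2"
    unfolding positive_on_sector_def
  proof (intro allI impI)
    fix \<phi> assume "t1 < \<phi> \<and> \<phi> < t2"
    then have "0 < sin (t2 - \<phi>)" using assms by (intro sin_gt_zero) auto
    then show "0 < (sin t2, - cos t2) \<bullet> (cos \<phi>, sin \<phi>)" by (simp add: sin_diff)
  qed
  show "positive_on_sector (- (sin t2, - cos t2)) s1 s2"
    unfolding positive_on_sector_def
  proof (intro allI impI)
    fix \<phi> assume "s1 < \<phi> \<and> \<phi> < s2"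
    then have "0 < sin (\<phi> - t2)" using assms by (intro sin_gt_zero) auto
    then show "0 < - (sin t2, - cos t2) \<bullet> (cos \<phi>, sin \<phi>)" by (simp add: sin_diff mult.commute)
  qed
qed

lemma inner_closed_segment:
  assumes "q \<in> closed_segment a b"
  obtains u :: real where "0 \<le> u" "u \<le> 1" "\<And>l. l \<bullet> q = l \<bullet> a + u * (l \<bullet> b - l \<bullet> a)"
    "u = 0 \<Longrightarrow> q = a"
proof -
  obtain u where u: "q = (1 - u) *\<^sub>R a + u *\<^sub>R b" "0 \<le> u" "u \<le> 1"
    using assms unfolding closed_segment_def by blast
  have "l \<bullet> q = l \<bullet> a + u * (l \<bullet> b - l \<bullet> a)" for l
    unfolding u(1) by (simp add: inner_add_right algebra_simps)
  then show ?thesis using that[of u] u by simp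
qed

lemma monotone_path_iff:
  "monotone_path pos xs \<longleftrightarrow>
     (\<exists>d. d \<noteq> 0 \<and> successively (\<lambda>a b. d \<bullet> rpt pos a < d \<bullet> rpt pos b) xs)"
  unfolding monotone_path_def successively_conv_nth proj_eq_inner by (auto simp: less_diff_conv)

lemma monotone_path_rev: "monotone_path pos xs \<Longrightarrow> monotone_path pos (rev xs)"
  unfolding monotone_path_iff successively_rev
  by (elim exE, rule_tac x="- d" in exI) (auto elim: successively_mono)

lemma walk_rev: "sym E \<Longrightarrow> walk E xs \<Longrightarrow> walk E (rev xs)"
  unfolding walk_iff_successively successively_rev
  by (auto elim: successively_mono dest: symD)

context algorithm2_run
begin

abbreviation pt :: "'a \<Rightarrow> real \<times> real" where
  "pt \<equiv> rpt pos"

lemma offset_in_sector: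
  assumes "x \<in> V" "x \<noteq> r"
  shows "in_sector (a1 x) (a2 x) (pt x - pt (parent x))"
proof -
  have "pt x - pt (parent x) = of_int_pt (P2 (a1 x) (a2 x))"
    using pos_child[OF assms] unfolding rpt_def of_int_pt_def by simp
  then show ?thesis
    using admissible_step_P2[OF angles_valid[OF assms(1)]] unfolding admissible_step_def by simp
qed

lemma positive_on_desc:
  "x \<in> V \<Longrightarrow> y \<in> desc x \<Longrightarrow> positive_on_sector l (a1 x) (a2 x) \<Longrightarrow> positive_on_sector l (a1 y) (a2 y)"
  using desc_sector_within positive_on_subsector by blast

lemma inner_offset_pos:
  assumes "x \<in> V" "x \<noteq> r" "positive_on_sector l (a1 x) (a2 x)"
  shows "l \<bullet> pt (parent x) < l \<bullet> pt x"
  using inner_pos_if_in_sector[OF assms(3) offset_in_sector[OF assms(1,2)]]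
  by (simp add: inner_diff_right)

lemma inner_desc_pos:
  assumes "x \<in> V" "x \<noteq> r" "positive_on_sector l (a1 x) (a2 x)" "y \<in> desc x"
  shows "l \<bullet> pt (parent x) < l \<bullet> pt y"
  using assms(4) unfolding desc_def mem_Collect_eq
proof (induction rule: rtrancl_induct)
  case base
  then show ?case using inner_offset_pos[OF assms(1-3)] .
next
  case (step y z)
  then have z: "z \<in> V" "z \<noteq> r" "y = parent z" using in_down_edges_iff by auto
  have "z \<in> desc x" using step unfolding desc_def by auto
  then have "l \<bullet> pt y < l \<bullet> pt z"
    using inner_offset_pos[OF z(1,2) positive_on_desc[OF assms(1) _ assms(3)]] z(3) by blast
  then show ?case using step.IH by linarith
qed

lemma child_towards_desc:
  assumes "u \<in> V" "v \<in> desc u" "v \<noteq> u"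
  obtains c l where "c \<in> V" "c \<noteq> r" "parent c = u" "v \<in> desc c"
    "positive_on_sector l (a1 u) (a2 u)" "positive_on_sector l (a1 c) (a2 c)"
proof -
  obtain c where c: "c \<in> V" "c \<noteq> r" "parent c = u" "v \<in> desc c"
    using assms(2,3) by (rule desc_through_child)
  have "a2 u - a1 u \<le> pi" using angles_valid[OF assms(1)] by linarith
  then have l: "positive_on_sector (cos ((a1 u + a2 u) / 2), sin ((a1 u + a2 u) / 2)) (a1 u) (a2 u)"
    by (rule positive_on_sector_bisector)
  have "c \<in> desc u" using in_desc_parent[OF c(1,2)] unfolding c(3) .
  from that[OF c l positive_on_desc[OF assms(1) this l]] show ?thesis .
qed

lemma siblings_towards_desc:
  assumes "u \<in> V" "v \<in> V" "u \<notin> desc v" "v \<notin> desc u"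
  obtains c c' l where "c \<in> V" "c \<noteq> r" "c' \<in> V" "c' \<noteq> r" "parent c = parent c'"
    "u \<in> desc c" "v \<in> desc c'"
    "positive_on_sector (- l) (a1 c) (a2 c)" "positive_on_sector l (a1 c') (a2 c')"
proof -
  obtain c c' where c: "c \<in> V" "c \<noteq> r" "c' \<in> V" "c' \<noteq> r" "c \<noteq> c'" "parent c = parent c'"
    "u \<in> desc c" "v \<in> desc c'"
    using assms by (rule incomparable_in_sibling_desc)
  have le: "0 \<le> a1 x" "a1 x \<le> a2 x" "a2 x \<le> pi" if "x \<in> V" for x
    using angles_valid[OF that] by auto
  from sibling_sectors_disjoint[OF c(1-4,6,5)] show ?thesis
  proof
    assume "a2 c \<le> a1 c'"
    note sep = positive_on_sectors_separated[OF le(1,2)[OF c(1)] this le(2,3)[OF c(3)]]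
    show ?thesis using that[OF c(1-4,6-8), of "- (sin (a2 c), - cos (a2 c))"] sep by simp
  next
    assume "a2 c' \<le> a1 c"
    note sep = positive_on_sectors_separated[OF le(1,2)[OF c(3)] this le(2,3)[OF c(1)]]
    show ?thesis using that[OF c(1-4,6-8), of "(sin (a2 c'), - cos (a2 c'))"] sep by simp
  qed
qed

lemma inner_edge_point_gt:
  assumes "x \<in> V" "x \<noteq> r" "positive_on_sector l (a1 x) (a2 x)" "y \<in> desc x"
    and "q \<in> closed_segment (pt (parent y)) (pt y)"
  shows "l \<bullet> pt (parent x) < l \<bullet> q \<or> (y = x \<and> q = pt (parent x))"
proof -
  have y: "y \<in> V" "y \<noteq> r" using desc_in_V[OF assms(1,4)] assms root_notin_desc by blast+
  obtain u where u: "0 \<le> u" "u \<le> 1"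
    "\<And>l. l \<bullet> q = l \<bullet> pt (parent y) + u * (l \<bullet> pt y - l \<bullet> pt (parent y))"
    "u = 0 \<Longrightarrow> q = pt (parent y)"
    by (rule inner_closed_segment[OF assms(5)]) blast
  have step: "l \<bullet> pt (parent y) < l \<bullet> pt y"
    using inner_offset_pos[OF y positive_on_desc[OF assms(1,4,3)]] .
  show ?thesis
  proof (cases "y = x")
    case False
    then have "l \<bullet> pt (parent x) < l \<bullet> pt (parent y)"
      using inner_desc_pos[OF assms(1-3)] parent_in_desc[OF assms(4)] by blast
    moreover have "0 \<le> u * (l \<bullet> pt y - l \<bullet> pt (parent y))" using u(1) step by simp
    ultimately show ?thesis using u(3) by auto
  next
    case True
    show ?thesis
    proof (cases "u = 0")
      case False
      then have "0 < u * (l \<bullet> pt y - l \<bullet> pt (parent y))" using u(1) step by simp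
      then show ?thesis using u(3) True by auto
    qed (use u(4) True in simp)
  qed
qed

lemma inner_edge_point_le:
  assumes "y \<in> V" "y \<noteq> r" "positive_on_sector l (a1 y) (a2 y)"
    and "q \<in> closed_segment (pt (parent y)) (pt y)"
  shows "l \<bullet> q \<le> l \<bullet> pt y"
proof -
  obtain u where u: "u \<le> 1" "l \<bullet> q = l \<bullet> pt (parent y) + u * (l \<bullet> pt y - l \<bullet> pt (parent y))"
    by (rule inner_closed_segment[OF assms(4)]) blast
  have "l \<bullet> pt (parent y) < l \<bullet> pt y" using inner_offset_pos[OF assms(1-3)] .
  then have "u * (l \<bullet> pt y - l \<bullet> pt (parent y)) \<le> l \<bullet> pt y - l \<bullet> pt (parent y)"
    using u(1) by (simp add: mult_left_le_one_le)
  then show ?thesis using u(2) by simp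
qed

lemma inj_on_pt: "inj_on pt V"
proof
  fix u v assume uv: "u \<in> V" "v \<in> V" "pt u = pt v"
  have beyond: False if ab: "a \<in> V" "b \<in> desc a" "b \<noteq> a" "pt a = pt b" for a b
  proof -
    obtain c l where "c \<in> V" "c \<noteq> r" "parent c = a" "b \<in> desc c" "positive_on_sector l (a1 c) (a2 c)"
      using ab(1-3) by (rule child_towards_desc)
    then have "l \<bullet> pt a < l \<bullet> pt b" using inner_desc_pos[of c l b] by simp
    then show False using ab(4) by simp
  qed
  show "u = v"
  proof (rule ccontr)
    assume "u \<noteq> v"
    then have "v \<notin> desc u" "u \<notin> desc v" using beyond uv by metis+
    then obtain c c' l where c: "c \<in> V" "c \<noteq> r" "c' \<in> V" "c' \<noteq> r" "parent c = parent c'"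
      "u \<in> desc c" "v \<in> desc c'" "positive_on_sector (- l) (a1 c) (a2 c)"
      "positive_on_sector l (a1 c') (a2 c')"
      using siblings_towards_desc[OF uv(1,2)] by blast
    have "- l \<bullet> pt (parent c) < - l \<bullet> pt u" using inner_desc_pos[OF c(1,2,8,6)] .
    moreover have "l \<bullet> pt (parent c) < l \<bullet> pt v" using inner_desc_pos[OF c(3,4,9,7)] c(5) by simp
    ultimately show False using uv(3) by simp
  qed
qed

lemma edge_segments_nested:
  assumes "y \<in> V" "y \<noteq> r" "y' \<in> desc y" "y' \<noteq> y"
    and "q \<in> closed_segment (pt (parent y)) (pt y)" "q \<in> closed_segment (pt (parent y')) (pt y')"
  shows "q = pt y \<and> parent y' = y"
proof -
  obtain c l where c: "c \<in> V" "c \<noteq> r" "parent c = y" "y' \<in> desc c"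
    and l: "positive_on_sector l (a1 y) (a2 y)" "positive_on_sector l (a1 c) (a2 c)"
    using assms(1,3,4) by (rule child_towards_desc)
  have "l \<bullet> pt y < l \<bullet> q \<or> (y' = c \<and> q = pt y)"
    using inner_edge_point_gt[OF c(1,2) l(2) c(4) assms(6)] c(3) by simp
  moreover have "l \<bullet> q \<le> l \<bullet> pt y" using inner_edge_point_le[OF assms(1,2) l(1) assms(5)] .
  ultimately show ?thesis using c(3) by auto
qed

lemma edge_segments_meet:
  assumes "y \<in> V" "y \<noteq> r" "y' \<in> V" "y' \<noteq> r" "y \<noteq> y'"
    and "q \<in> closed_segment (pt (parent y)) (pt y)" "q \<in> closed_segment (pt (parent y')) (pt y')"
  shows "q \<in> pt ` ({parent y, y} \<inter> {parent y', y'})"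
proof (cases "y' \<in> desc y")
  case True
  then have "q = pt y" "parent y' = y"
    using edge_segments_nested[OF assms(1,2) True _ assms(6,7)] assms(5) by auto
  then show ?thesis by auto
next
  case y'_notin: False
  show ?thesis
  proof (cases "y \<in> desc y'")
    case True
    then have "q = pt y'" "parent y = y'"
      using edge_segments_nested[OF assms(3,4) True _ assms(7,6)] assms(5) by auto
    then show ?thesis by auto
  next
    case False
    then obtain c c' l where c: "c \<in> V" "c \<noteq> r" "c' \<in> V" "c' \<noteq> r" "parent c = parent c'"
      "y \<in> desc c" "y' \<in> desc c'" "positive_on_sector (- l) (a1 c) (a2 c)"
      "positive_on_sector l (a1 c') (a2 c')"
      using siblings_towards_desc[OF assms(1,3)] y'_notin by blast
    have "- l \<bullet> pt (parent c) < - l \<bullet> q \<or> (y = c \<and> q = pt (parent c))"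
      using inner_edge_point_gt[OF c(1,2,8,6) assms(6)] .
    moreover have "l \<bullet> pt (parent c) < l \<bullet> q \<or> (y' = c' \<and> q = pt (parent c))"
      using inner_edge_point_gt[OF c(3,4,9,7) assms(7)] c(5) by simp
    ultimately have "y = c" "y' = c'" "q = pt (parent c)" by auto
    then show ?thesis using c(5) by auto
  qed
qed

lemma vertex_on_edge_segment:
  assumes "y \<in> V" "y \<noteq> r" "w \<in> V" "pt w \<in> closed_segment (pt (parent y)) (pt y)"
  shows "w = parent y \<or> w = y"
proof (cases "w = r")
  case True
  have "y \<in> desc r" using desc_root assms(1) by simp
  then obtain c l where c: "c \<in> V" "c \<noteq> r" "parent c = r" "y \<in> desc c"
    and l: "positive_on_sector l (a1 c) (a2 c)"
    using assms(2) by (elim child_towards_desc[OF root_in_V]) auto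
  then have "y = c" using inner_edge_point_gt[OF c(1,2) l c(4) assms(4)] True by auto
  then show ?thesis using c(3) True by simp
next
  case False
  have own_edge: "pt w \<in> closed_segment (pt (parent w)) (pt w)" by simp
  show ?thesis
  proof (rule ccontr)
    assume w: "\<not> (w = parent y \<or> w = y)"
    then have "pt w \<in> pt ` ({parent y, y} \<inter> {parent w, w})"
      using edge_segments_meet[OF assms(1,2,3) False _ assms(4) own_edge] by blast
    then obtain t where "t \<in> {parent y, y}" "pt w = pt t" by blast
    moreover have "parent y \<in> V" using parent_in_V[OF assms(1,2)] .
    ultimately have "w = t" using inj_onD[OF inj_on_pt _ assms(3)] assms(1) by blast
    then show False using w \<open>t \<in> {parent y, y}\<close> by blast
  qed
qed

lemma edge_is_parent_edge:
  assumes "(a, b) \<in> E"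
  obtains y where "y \<in> V" "y \<noteq> r" "{a, b} = {parent y, y}"
    "closed_segment (pt a) (pt b) = closed_segment (pt (parent y)) (pt y)"
proof -
  from edge_cases[OF assms] show ?thesis
  proof
    assume "b \<in> V \<and> b \<noteq> r \<and> a = parent b"
    then show ?thesis using that[of b] by auto
  next
    assume "a \<in> V \<and> a \<noteq> r \<and> b = parent a"
    then show ?thesis using that[of a] by (auto simp: closed_segment_commute)
  qed
qed

lemma planar_drawing_pos: "planar_drawing V E pos"
  unfolding planar_drawing_def
proof (intro conjI allI impI)
  have "pt = of_int_pt \<circ> pos" by (simp add: fun_eq_iff rpt_def of_int_pt_def)
  then show "inj_on pos V" using inj_on_pt inj_on_imageI2 by metis
next
  fix a b c d assume h: "(a, b) \<in> E \<and> (c, d) \<in> E \<and> {a, b} \<noteq> {c, d}"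
  obtain y where y: "y \<in> V" "y \<noteq> r" "{a, b} = {parent y, y}"
    "closed_segment (pt a) (pt b) = closed_segment (pt (parent y)) (pt y)"
    using h edge_is_parent_edge by blast
  obtain y' where y': "y' \<in> V" "y' \<noteq> r" "{c, d} = {parent y', y'}"
    "closed_segment (pt c) (pt d) = closed_segment (pt (parent y')) (pt y')"
    using h edge_is_parent_edge by blast
  have "y \<noteq> y'" using h y y' by auto
  then show "closed_segment (pt a) (pt b) \<inter> closed_segment (pt c) (pt d) \<subseteq> pt ` ({a, b} \<inter> {c, d})"
    unfolding y(3,4) y'(3,4) using edge_segments_meet[OF y(1,2) y'(1,2)] by blast
next
  fix a b w assume h: "(a, b) \<in> E \<and> w \<in> V \<and> w \<notin> {a, b}"
  obtain y where y: "y \<in> V" "y \<noteq> r" "{a, b} = {parent y, y}"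
    "closed_segment (pt a) (pt b) = closed_segment (pt (parent y)) (pt y)"
    using h edge_is_parent_edge by blast
  show "pt w \<notin> closed_segment (pt a) (pt b)"
  proof
    assume "pt w \<in> closed_segment (pt a) (pt b)"
    then have "w = parent y \<or> w = y" using vertex_on_edge_segment[OF y(1,2)] h unfolding y(4) by blast
    then show False using h y(3) by auto
  qed
qed

subsection \<open>Monotonicity\<close>

definition ascending_edge :: "real \<times> real \<Rightarrow> 'a \<Rightarrow> 'a \<Rightarrow> bool" where
  "ascending_edge l a b \<longleftrightarrow> (a, b) \<in> E \<and> l \<bullet> pt a < l \<bullet> pt b"

lemma monotone_walk_if_ascending:
  assumes "xs \<noteq> []" "successively (ascending_edge l) xs" "l \<noteq> 0"
  shows "walk E xs \<and> distinct xs \<and> monotone_path pos xs"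
proof -
  have "successively (\<lambda>a b. (a, b) \<in> E) xs" and asc: "successively (\<lambda>a b. l \<bullet> pt a < l \<bullet> pt b) xs"
    using assms(2) by (auto elim: successively_mono simp: ascending_edge_def)
  moreover have "distinct xs" using distinct_if_successively_less[OF asc] .
  ultimately show ?thesis
    using assms(1,3) unfolding walk_iff_successively monotone_path_iff by blast
qed

lemma ascending_edge_down:
  assumes "c \<in> V" "c \<noteq> r" "positive_on_sector l (a1 c) (a2 c)" "a \<in> desc c"
  shows "ascending_edge l (parent a) a"
proof -
  have a: "a \<in> V" "a \<noteq> r" using desc_in_V[OF assms(1,4)] root_notin_desc assms by blast+
  then show ?thesis unfolding ascending_edge_def
    using inner_offset_pos[OF a positive_on_desc[OF assms(1,4,3)]] parent_edge[OF a] by simp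
qed

lemma ascending_edge_up:
  assumes "c \<in> V" "c \<noteq> r" "positive_on_sector (- l) (a1 c) (a2 c)" "a \<in> desc c"
  shows "ascending_edge l a (parent a)"
proof -
  have a: "a \<in> V" "a \<noteq> r" using desc_in_V[OF assms(1,4)] root_notin_desc assms by blast+
  have "(a, parent a) \<in> E" using parent_edge[OF a] sym_edges by (auto dest: symD)
  then show ?thesis unfolding ascending_edge_def
    using inner_offset_pos[OF a positive_on_desc[OF assms(1,4,3)]] by simp
qed

lemma ascending_path_up:
  assumes "c \<in> V" "c \<noteq> r" "positive_on_sector (- l) (a1 c) (a2 c)" "x \<in> desc c"
  shows "successively (ascending_edge l) (path_up x (depth x - depth c))"
  by (rule successively_mono[OF successively_path_up[OF assms(4)]])
     (use ascending_edge_up[OF assms(1-3)] in blast)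

lemma ascending_path_down:
  assumes "c \<in> V" "c \<noteq> r" "positive_on_sector l (a1 c) (a2 c)" "x \<in> desc c"
  shows "successively (ascending_edge l) (rev (path_up x (depth x - depth c)))"
  unfolding successively_rev
  by (rule successively_mono[OF successively_path_up[OF assms(4)]])
     (use ascending_edge_down[OF assms(1-3)] in blast)

lemma monotone_walk_to_desc:
  assumes "u \<in> V" "v \<in> desc u" "v \<noteq> u"
  shows "\<exists>xs. walk E xs \<and> distinct xs \<and> hd xs = u \<and> last xs = v \<and> monotone_path pos xs"
proof -
  obtain c l where c: "c \<in> V" "c \<noteq> r" "parent c = u" "v \<in> desc c"
    and l: "positive_on_sector l (a1 c) (a2 c)"
    using assms by (rule child_towards_desc)
  define xs where "xs = u # rev (path_up v (depth v - depth c))"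
  have "successively (ascending_edge l) xs"
    using ascending_path_down[OF c(1,2) l c(4)] ascending_edge_down[OF c(1,2) l desc_refl]
    unfolding xs_def by (simp add: successively_Cons hd_rev last_path_up_to[OF c(4)] c(3))
  then have "walk E xs \<and> distinct xs \<and> monotone_path pos xs"
    using monotone_walk_if_ascending positive_on_sector_nonzero[OF angles_valid(2)[OF c(1)] l]
    unfolding xs_def by blast
  moreover have "hd xs = u" "last xs = v" unfolding xs_def by (simp_all add: last_rev)
  ultimately show ?thesis by blast
qed

lemma monotone_walk_incomparable:
  assumes "u \<in> V" "v \<in> V" "u \<notin> desc v" "v \<notin> desc u"
  shows "\<exists>xs. walk E xs \<and> distinct xs \<and> hd xs = u \<and> last xs = v \<and> monotone_path pos xs"
proof -
  obtain c c' l where c: "c \<in> V" "c \<noteq> r" "c' \<in> V" "c' \<noteq> r" "parent c = parent c'"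
    "u \<in> desc c" "v \<in> desc c'"
    and l: "positive_on_sector (- l) (a1 c) (a2 c)" "positive_on_sector l (a1 c') (a2 c')"
    using assms by (rule siblings_towards_desc)
  define xs where
    "xs = path_up u (depth u - depth c) @ parent c # rev (path_up v (depth v - depth c'))"
  have "ascending_edge l c (parent c)" using ascending_edge_up[OF c(1,2) l(1) desc_refl] .
  moreover have "ascending_edge l (parent c) c'" using ascending_edge_down[OF c(3,4) l(2) desc_refl] c(5) by simp
  ultimately have "successively (ascending_edge l) xs"
    using ascending_path_up[OF c(1,2) l(1) c(6)] ascending_path_down[OF c(3,4) l(2) c(7)]
    unfolding xs_def
    by (simp add: successively_append_iff successively_Cons hd_rev last_path_up_to[OF c(6)]
        last_path_up_to[OF c(7)])
  then have "walk E xs \<and> distinct xs \<and> monotone_path pos xs"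
    using monotone_walk_if_ascending positive_on_sector_nonzero[OF angles_valid(2)[OF c(3)] l(2)]
    unfolding xs_def by blast
  moreover have "hd xs = u" "last xs = v" unfolding xs_def by (simp_all add: last_rev)
  ultimately show ?thesis by blast
qed

lemma monotone_drawing_pos: "monotone_drawing V E pos"
  unfolding monotone_drawing_def
proof (intro ballI)
  fix u v assume uv: "u \<in> V" "v \<in> V"
  consider "u = v" | "u \<noteq> v" "v \<in> desc u" | "u \<noteq> v" "u \<in> desc v" | "u \<notin> desc v" "v \<notin> desc u"
    by blast
  then show "\<exists>xs. walk E xs \<and> distinct xs \<and> hd xs = u \<and> last xs = v \<and> monotone_path pos xs"
  proof cases
    case 1
    have "monotone_path pos [u]" unfolding monotone_path_iff
      by (intro exI[of _ "(1, 0)"]) (simp add: zero_prod_def)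
    then show ?thesis using 1 by (intro exI[of _ "[u]"]) (simp add: walk_def)
  next
    case 2
    then show ?thesis using monotone_walk_to_desc uv by blast
  next
    case 3
    then obtain xs where "walk E xs" "distinct xs" "hd xs = v" "last xs = u" "monotone_path pos xs"
      using monotone_walk_to_desc uv by metis
    then show ?thesis
      using walk_rev[OF sym_edges] monotone_path_rev
      by (intro exI[of _ "rev xs"]) (auto simp: hd_rev last_rev walk_def)
  next
    case 4
    then show ?thesis using monotone_walk_incomparable uv by blast
  qed
qed

subsection \<open>Grid size\<close>

lemma desc_subset_comp_without:
  assumes "x \<in> V" "x \<noteq> r"
  shows "desc x \<subseteq> comp_without V E r x"
proof
  fix y assume "y \<in> desc x"
  then show "y \<in> comp_without V E r x"
    unfolding comp_without_def mem_Collect_eq desc_def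
  proof (induction rule: rtrancl_induct)
    case (step y z)
    then have z: "z \<in> V" "z \<noteq> r" "y = parent z" using in_down_edges_iff by auto
    have "y \<in> desc x" using step(1) unfolding desc_def by simp
    then have "y \<in> V" "y \<noteq> r" using desc_in_V[OF assms(1)] root_notin_desc[OF assms(2,1)] by auto
    moreover have "(y, z) \<in> E" using parent_edge[OF z(1,2)] z(3) by simp
    ultimately show ?case using z by (auto intro: rtrancl_into_rtrancl[OF step(3)])
  qed simp
qed

lemma finite_comp_without: "finite (comp_without V E r x)"
proof (rule finite_subset)
  show "comp_without V E r x \<subseteq> insert x V"
    unfolding comp_without_def by (auto elim: rtranclE)
qed (use finite_V in simp)

lemma subtree_size_le_half:
  assumes "x \<in> V" "x \<noteq> r"
  shows "subtree_size x \<le> real (card V div 2)"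
proof -
  have "card (desc x) \<le> card (comp_without V E r x)"
    using card_mono[OF finite_comp_without desc_subset_comp_without[OF assms]] .
  moreover have "real (card (comp_without V E r x)) \<le> real (card V) / 2"
    using algorithm2 assms unfolding algorithm2_def gravity_root_def by auto
  ultimately have "2 * card (desc x) \<le> card V" by linarith
  then have "card (desc x) \<le> card V div 2" by linarith
  then show ?thesis unfolding subtree_size_def by simp
qed

lemma subtree_size_root: "subtree_size r = real (card V)"
  unfolding subtree_size_def desc_root ..

lemma width_root: "width r = pi"
  unfolding width_def using angles_root by simp

lemma card_V_ge_2: "x \<in> V \<Longrightarrow> x \<noteq> r \<Longrightarrow> 2 \<le> card V"
  using card_mono[OF finite_V, of "{r, x}"] root_in_V by auto

definition width_bound :: real where
  "width_bound = pi * real (card V div 2) / (real (card V) - 1)"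

lemma width_bound_ge:
  assumes "x \<in> V" "x \<noteq> r"
  shows "pi / 2 \<le> width_bound"
proof -
  have n: "0 < real (card V) - 1" using card_V_ge_2[OF assms] by simp
  have "pi / 2 = pi * ((real (card V) - 1) / 2) / (real (card V) - 1)" using n by (simp add: field_simps)
  also have "\<dots> \<le> width_bound"
    unfolding width_bound_def using div_2_ge[of "card V"] n
    by (intro divide_right_mono mult_left_mono) auto
  finally show ?thesis .
qed

lemma width_le_bound:
  assumes "x \<in> V" "x \<noteq> r"
  shows "width x \<le> width_bound"
proof -
  have "x \<noteq> r \<longrightarrow> width x \<le> width_bound"
    using assms(1)
  proof (induction rule: parent_induct)
    case (parent y)
    have "subtree_size y \<le> subtree_size (parent y) - 1" "1 \<le> subtree_size y"
      using subtree_size_child_le[OF parent(1,2)] subtree_size_ge_1[OF parent(1)] by auto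
    show ?case
    proof (cases "parent y = r")
      case True
      have n: "0 < real (card V) - 1" using card_V_ge_2[OF parent(1,2)] by simp
      have "width y = pi * subtree_size y / (real (card V) - 1)"
        using width_child[OF parent(1,2)] True width_root subtree_size_root by simp
      also have "\<dots> \<le> width_bound"
        unfolding width_bound_def using subtree_size_le_half[OF parent(1,2)] n
        by (intro divide_right_mono) auto
      finally show ?thesis by simp
    next
      case False
      have ratio: "subtree_size y / (subtree_size (parent y) - 1) \<le> 1"
        using \<open>subtree_size y \<le> subtree_size (parent y) - 1\<close> \<open>1 \<le> subtree_size y\<close> by simp
      have "width y = width (parent y) * (subtree_size y / (subtree_size (parent y) - 1))"
        using width_child[OF parent(1,2)] by simp
      also have "\<dots> \<le> width (parent y)"
        using ratio width_pos[OF parent_in_V[OF parent(1,2)]] by (intro mult_left_le) auto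
      finally have "width y \<le> width (parent y)" .
      then show ?thesis using parent.IH False by simp
    qed
  qed simp
  then show ?thesis using assms(2) by blast
qed

lemma width_bound_nonneg: "0 \<le> width_bound"
  unfolding width_bound_def using card_V_ge_2 by (cases "card V") auto

text \<open>Potential argument: along the edge to a child \<open>y\<close> the quantity \<open>(subtree_size - 1) / width\<close>
  drops from \<open>s y / W y\<close> (at the parent, by Strategy 1) to \<open>(s y - 1) / W y\<close>, i.e.\ by \<open>1 / W y\<close>,
  while each coordinate changes by at most \<open>width_bound / W y\<close>.\<close>

definition potential :: "'a \<Rightarrow> real" where
  "potential x = width_bound * ((real (card V) - 1) / pi - (subtree_size x - 1) / width x)"

lemma coords_le_potential:
  assumes "x \<in> V"
  shows "real_of_int \<bar>fst (pos x)\<bar> \<le> potential x \<and> 0 \<le> snd (pos x)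
    \<and> real_of_int (snd (pos x)) \<le> potential x"
  using assms(1)
proof (induction rule: parent_induct)
  case root
  then show ?case using pos_root subtree_size_root width_root unfolding potential_def by simp
next
  case (parent y)
  let ?p = "parent y"
  have "1 \<le> subtree_size y" "subtree_size y \<le> subtree_size ?p - 1" "0 < width ?p" "0 < width y"
    using subtree_size_ge_1 subtree_size_child_le width_pos parent_in_V parent(1,2) by auto
  then have "(subtree_size ?p - 1) / width ?p = subtree_size y / width y"
    unfolding width_child[OF parent(1,2)] by (simp add: field_simps)
  then have "(subtree_size ?p - 1) / width ?p - (subtree_size y - 1) / width y = 1 / width y"
    by (simp add: diff_divide_distrib)
  moreover have "potential y - potential ?p
      = width_bound * ((subtree_size ?p - 1) / width ?p - (subtree_size y - 1) / width y)"
    unfolding potential_def by (simp add: right_diff_distrib)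
  ultimately have potential_step: "potential y = potential ?p + width_bound / width y" by simp
  define d where "d = P2 (a1 y) (a2 y)"
  have "admissible_step (a1 y) (a2 y) d"
    using admissible_step_P2[OF angles_valid[OF parent(1)]] unfolding d_def .
  moreover have "max 1 (pi / (2 * width y)) \<le> width_bound / width y"
    using max_one_pi_half_div_le[OF \<open>0 < width y\<close> width_le_bound[OF parent(1,2)]
        width_bound_ge[OF parent(1,2)]] .
  ultimately have d: "real_of_int \<bar>fst d\<bar> \<le> width_bound / width y" "0 \<le> snd d"
    "real_of_int (snd d) \<le> width_bound / width y"
    unfolding admissible_step_def width_def by linarith+
  have "pos y = pos ?p + d" using pos_child[OF parent(1,2)] unfolding d_def .
  then have "fst (pos y) = fst (pos ?p) + fst d" "snd (pos y) = snd (pos ?p) + snd d" by simp_all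
  moreover have "real_of_int \<bar>fst (pos ?p) + fst d\<bar> \<le> real_of_int \<bar>fst (pos ?p)\<bar> + real_of_int \<bar>fst d\<bar>"
    by (simp add: abs_triangle_ineq)
  ultimately show ?case using parent.IH d unfolding potential_step by simp
qed

lemma coords_bound:
  assumes "v \<in> V"
  shows "\<bar>fst (pos v)\<bar> \<le> int (card V div 2) \<and> 0 \<le> snd (pos v) \<and> snd (pos v) \<le> int (card V div 2)"
proof -
  have "width_bound * ((real (card V) - 1) / pi) = real (card V div 2)"
  proof (cases "card V = 1")
    case False
    moreover have "0 < card V" using finite_V root_in_V by (auto simp: card_gt_0_iff)
    ultimately have "0 < real (card V) - 1" by simp
    then show ?thesis unfolding width_bound_def by simp
  qed (simp add: width_bound_def)
  moreover have "0 \<le> (subtree_size v - 1) / width v"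
    using subtree_size_ge_1[OF assms] width_pos[OF assms] by simp
  then have "0 \<le> width_bound * ((subtree_size v - 1) / width v)"
    using width_bound_nonneg by (rule mult_nonneg_nonneg[rotated])
  moreover have "potential v = width_bound * ((real (card V) - 1) / pi)
      - width_bound * ((subtree_size v - 1) / width v)"
    unfolding potential_def by (simp add: right_diff_distrib)
  ultimately have "potential v \<le> real (card V div 2)" by linarith
  then show ?thesis using coords_le_potential[OF assms] by linarith
qed

end

lemma box_in_grid:
  fixes p :: "'a \<Rightarrow> int \<times> int"
  assumes "\<forall>v\<in>S. \<bar>fst (p v)\<bar> \<le> int B \<and> 0 \<le> snd (p v) \<and> snd (p v) \<le> int B"
    and "2 * B + 1 \<le> w" "B + 1 \<le> h"
  shows "\<exists>x0 y0. \<forall>v\<in>S. fst (p v) \<in> {x0 ..< x0 + int w} \<and> snd (p v) \<in> {y0 ..< y0 + int h}"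
proof -
  have "\<forall>v\<in>S. fst (p v) \<in> {- int B ..< - int B + int w} \<and> snd (p v) \<in> {0 ..< 0 + int h}"
    using assms by (auto simp: abs_le_iff)
  then show ?thesis by blast
qed

lemma odd_ind_div_2: "(n - odd_ind n) div 2 = n div 2"
  unfolding odd_ind_def by (cases "odd n") (auto elim: oddE)

theorem theorem5:
  fixes V :: "'a set" and E :: "('a \<times> 'a) set" and r :: 'a
    and chl :: "'a \<Rightarrow> 'a list" and a1 a2 :: "'a \<Rightarrow> real" and pos :: "'a \<Rightarrow> int \<times> int"
  assumes "is_tree V E"
    and "algorithm2 V E r chl a1 a2 pos"
  shows "monotone_drawing V E pos \<and> planar_drawing V E pos
    \<and> (\<forall>v\<in>V. \<bar>fst (pos v)\<bar> \<le> int ((card V - odd_ind (card V)) div 2)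
              \<and> 0 \<le> snd (pos v) \<and> snd (pos v) \<le> int ((card V - odd_ind (card V)) div 2))
    \<and> (odd (card V) \<longrightarrow> (\<exists>x0 y0. \<forall>v\<in>V.
          fst (pos v) \<in> {x0 ..< x0 + int (card V)} \<and> snd (pos v) \<in> {y0 ..< y0 + int ((card V + 1) div 2)}))
    \<and> (even (card V) \<longrightarrow> (\<exists>x0 y0. \<forall>v\<in>V.
          fst (pos v) \<in> {x0 ..< x0 + int (card V + 1)} \<and> snd (pos v) \<in> {y0 ..< y0 + int (card V div 2 + 1)}))"
proof -
  have "r \<in> V" using assms(2) unfolding algorithm2_def gravity_root_def by blast
  then interpret algorithm2_run V E r chl a1 a2 pos
    using assms by unfold_locales
  have bound: "\<forall>v\<in>V. \<bar>fst (pos v)\<bar> \<le> int (card V div 2) \<and> 0 \<le> snd (pos v)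
      \<and> snd (pos v) \<le> int (card V div 2)"
    using coords_bound by blast
  show ?thesis
    unfolding odd_ind_div_2
  proof (intro conjI impI box_in_grid[OF bound])
    assume "odd (card V)"
    then show "2 * (card V div 2) + 1 \<le> card V" "card V div 2 + 1 \<le> (card V + 1) div 2"
      by presburger+
  qed (use monotone_drawing_pos planar_drawing_pos bound in auto)
qed

end
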